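(* Let $X$ be an infinite-dimensional complex Banach space and $T\in L(X)$ be such that $\sigma_{ap}(T)=\partial\sigma(T)$ and no point of $\partial\sigma(T)$ is isolated in $\sigma(T)$. Then $$\sigma_{ec}(T)\subset\sigma_{ap}(T)=\sigma_{gKR}(T)=\sigma_{gK}(T)=\sigma_{Kt}(T)=\sigma_{eK}(T)=\sigma_K(T)=\sigma_{\mathbf{gDR}\mathcal M}(T).$$
   Context: $\sigma_{ap}(T)$ is the set of $\lambda$ with $T-\lambda$ not bounded below (not injective with closed range); $\sigma_{ec}(T)=\{\lambda: R(T-\lambda)\text{ not closed}\}$. $S$ is Kato if $R(S)$ is closed and $N(S)\subset R(S^n)$ for all $n$; $S$ is Riesz if $S-\lambda$ is Fredholm for all $\lambda\ne0$. For an operator $S$ and closed $S$-invariant $M,N$ with $X=M\oplus N$ and $S_M$ Kato: if $S_N$ is Riesz, $S$ admits a GKRD; if $S_N$ is quasinilpotent, a GKD; if $S_N$ is nilpotent, $S$ is of Kato type; if $N$ is finite-dimensional and $S_N$ nilpotent, $S$ is essentially Kato. $\sigma_{gKR}$, $\sigma_{gK}$, $\sigma_{Kt}$, $\sigma_{eK}$, $\sigma_K$: sets of $\lambda$ with $T-\lambda$ not admitting a GKRD, not admitting a GKD, not of Kato type, not essentially Kato, not Kato. $\sigma_{\mathbf{gDR}\mathcal M}(T)$ is the set of $\lambda$ for which there are no closed $(T-\lambda)$-invariant $M,N$ with $X=M\oplus N$, $(T-\lambda)_M$ bounded below and $(T-\lambda)_N$ Riesz. *)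

theory Defs
  imports "HOL-Analysis.Analysis"
begin

text \<open>HOL-Analysis has no complex vector spaces; a complex Banach space is a real
 Banach space with a complex scalar multiplication extending the real one and
 compatible with the norm.\<close>

class cbanach = banach +
  fixes scaleC :: "complex \<Rightarrow> 'a \<Rightarrow> 'a" (infixr \<open>*\<^sub>C\<close> 75)
  assumes scaleC_add_right: "a *\<^sub>C (x + y) = a *\<^sub>C x + a *\<^sub>C y"
    and scaleC_add_left: "(a + b) *\<^sub>C x = a *\<^sub>C x + b *\<^sub>C x"
    and scaleC_scaleC: "a *\<^sub>C (b *\<^sub>C x) = (a * b) *\<^sub>C x"
    and scaleC_one: "1 *\<^sub>C x = x"
    and scaleR_scaleC: "scaleR r x = complex_of_real r *\<^sub>C x"
    and norm_scaleC: "norm (a *\<^sub>C x) = cmod a * norm x"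

instantiation complex :: cbanach
begin
definition scaleC_complex :: "complex \<Rightarrow> complex \<Rightarrow> complex" where
  "scaleC_complex a x = a * x"
instance
  by standard (auto simp: scaleC_complex_def algebra_simps norm_mult scaleR_conv_of_real)
end

definition csubspace :: "'a::cbanach set \<Rightarrow> bool" where
  "csubspace M \<longleftrightarrow> 0 \<in> M \<and> (\<forall>x\<in>M. \<forall>y\<in>M. x + y \<in> M) \<and> (\<forall>c. \<forall>x\<in>M. c *\<^sub>C x \<in> M)"

definition cspan :: "'a::cbanach set \<Rightarrow> 'a set" where
  "cspan B = csubspace hull B"

definition fin_dim :: "'a::cbanach set \<Rightarrow> bool" where
  "fin_dim K \<longleftrightarrow> (\<exists>B. finite B \<and> B \<subseteq> K \<and> K \<subseteq> cspan B)"

definition bounded_clinear :: "('a::cbanach \<Rightarrow> 'a) \<Rightarrow> bool" where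
  "bounded_clinear T \<longleftrightarrow> bounded_linear T \<and> (\<forall>c x. T (c *\<^sub>C x) = c *\<^sub>C T x)"

definition opshift :: "('a::cbanach \<Rightarrow> 'a) \<Rightarrow> complex \<Rightarrow> 'a \<Rightarrow> 'a" where
  "opshift T z = (\<lambda>x. T x - z *\<^sub>C x)"

section \<open>Notions for the restriction S_N of S to a closed invariant subspace N\<close>

definition invertible_on :: "('a::cbanach \<Rightarrow> 'a) \<Rightarrow> 'a set \<Rightarrow> bool" where
  "invertible_on S N \<longleftrightarrow> (\<exists>R. R ` N \<subseteq> N \<and> (\<forall>x\<in>N. R (S x) = x \<and> S (R x) = x)
       \<and> (\<exists>K. \<forall>x\<in>N. norm (R x) \<le> K * norm x))"

definition spectrum_on :: "('a::cbanach \<Rightarrow> 'a) \<Rightarrow> 'a set \<Rightarrow> complex set" where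
  "spectrum_on S N = {z. \<not> invertible_on (opshift S z) N}"

definition bounded_below_on :: "('a::cbanach \<Rightarrow> 'a) \<Rightarrow> 'a set \<Rightarrow> bool" where
  "bounded_below_on S M \<longleftrightarrow> (\<exists>c>0. \<forall>x\<in>M. c * norm x \<le> norm (S x))"

definition kato_on :: "('a::cbanach \<Rightarrow> 'a) \<Rightarrow> 'a set \<Rightarrow> bool" where
  "kato_on S M \<longleftrightarrow> closed (S ` M) \<and> (\<forall>n. {x\<in>M. S x = 0} \<subseteq> (S ^^ n) ` M)"

definition fredholm_on :: "('a::cbanach \<Rightarrow> 'a) \<Rightarrow> 'a set \<Rightarrow> bool" where
  "fredholm_on S N \<longleftrightarrow> fin_dim {x\<in>N. S x = 0} \<and> closed (S ` N)
     \<and> (\<exists>B. finite B \<and> B \<subseteq> N \<and> N \<subseteq> {r + y |r y. r \<in> S ` N \<and> y \<in> cspan B})"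

definition riesz_on :: "('a::cbanach \<Rightarrow> 'a) \<Rightarrow> 'a set \<Rightarrow> bool" where
  "riesz_on S N \<longleftrightarrow> (\<forall>z. z \<noteq> 0 \<longrightarrow> fredholm_on (opshift S z) N)"

definition quasinilpotent_on :: "('a::cbanach \<Rightarrow> 'a) \<Rightarrow> 'a set \<Rightarrow> bool" where
  "quasinilpotent_on S N \<longleftrightarrow> spectrum_on S N \<subseteq> {0}"

definition nilpotent_on :: "('a::cbanach \<Rightarrow> 'a) \<Rightarrow> 'a set \<Rightarrow> bool" where
  "nilpotent_on S N \<longleftrightarrow> (\<exists>n. \<forall>x\<in>N. (S ^^ n) x = 0)"

definition reducing_pair :: "('a::cbanach \<Rightarrow> 'a) \<Rightarrow> 'a set \<Rightarrow> 'a set \<Rightarrow> bool" where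
  "reducing_pair S M N \<longleftrightarrow> csubspace M \<and> csubspace N \<and> closed M \<and> closed N
     \<and> S ` M \<subseteq> M \<and> S ` N \<subseteq> N \<and> M \<inter> N = {0}
     \<and> (\<forall>x. \<exists>m\<in>M. \<exists>n\<in>N. x = m + n)"

definition has_GKRD :: "('a::cbanach \<Rightarrow> 'a) \<Rightarrow> bool" where
  "has_GKRD S \<longleftrightarrow> (\<exists>M N. reducing_pair S M N \<and> kato_on S M \<and> riesz_on S N)"

definition has_GKD :: "('a::cbanach \<Rightarrow> 'a) \<Rightarrow> bool" where
  "has_GKD S \<longleftrightarrow> (\<exists>M N. reducing_pair S M N \<and> kato_on S M \<and> quasinilpotent_on S N)"

definition kato_type :: "('a::cbanach \<Rightarrow> 'a) \<Rightarrow> bool" where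
  "kato_type S \<longleftrightarrow> (\<exists>M N. reducing_pair S M N \<and> kato_on S M \<and> nilpotent_on S N)"

definition essentially_kato :: "('a::cbanach \<Rightarrow> 'a) \<Rightarrow> bool" where
  "essentially_kato S \<longleftrightarrow> (\<exists>M N. reducing_pair S M N \<and> kato_on S M \<and> fin_dim N \<and> nilpotent_on S N)"

definition kato :: "('a::cbanach \<Rightarrow> 'a) \<Rightarrow> bool" where
  "kato S \<longleftrightarrow> kato_on S UNIV"

definition has_gDR_M :: "('a::cbanach \<Rightarrow> 'a) \<Rightarrow> bool" where
  "has_gDR_M S \<longleftrightarrow> (\<exists>M N. reducing_pair S M N \<and> bounded_below_on S M \<and> riesz_on S N)"

definition spectrum :: "('a::cbanach \<Rightarrow> 'a) \<Rightarrow> complex set" where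
  "spectrum T = spectrum_on T UNIV"

definition sigma_ap :: "('a::cbanach \<Rightarrow> 'a) \<Rightarrow> complex set" where
  "sigma_ap T = {z. \<not> bounded_below_on (opshift T z) UNIV}"

definition sigma_ec :: "('a::cbanach \<Rightarrow> 'a) \<Rightarrow> complex set" where
  "sigma_ec T = {z. \<not> closed (range (opshift T z))}"

definition sigma_gKR :: "('a::cbanach \<Rightarrow> 'a) \<Rightarrow> complex set" where
  "sigma_gKR T = {z. \<not> has_GKRD (opshift T z)}"

definition sigma_gK :: "('a::cbanach \<Rightarrow> 'a) \<Rightarrow> complex set" where
  "sigma_gK T = {z. \<not> has_GKD (opshift T z)}"

definition sigma_Kt :: "('a::cbanach \<Rightarrow> 'a) \<Rightarrow> complex set" where
  "sigma_Kt T = {z. \<not> kato_type (opshift T z)}"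

definition sigma_eK :: "('a::cbanach \<Rightarrow> 'a) \<Rightarrow> complex set" where
  "sigma_eK T = {z. \<not> essentially_kato (opshift T z)}"

definition sigma_K :: "('a::cbanach \<Rightarrow> 'a) \<Rightarrow> complex set" where
  "sigma_K T = {z. \<not> kato (opshift T z)}"

definition sigma_gDRM :: "('a::cbanach \<Rightarrow> 'a) \<Rightarrow> complex set" where
  "sigma_gDRM T = {z. \<not> has_gDR_M (opshift T z)}"

end

theory Submission
  imports Defs
begin

text \<open>Let l \<in> \<sigma>_ap(T) = \<partial>\<sigma>(T) and suppose S = T - l had a GKRD X = M \<oplus> N.
  Resolvent points accumulate at l, so S is injective on the Kato part M (a Kato
  operator with a nonzero kernel vector has eigenvectors for all small parameters);
  hence S_M is bounded below and T - \<nu> is invertible on M for \<nu> near l.  Near l there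
  is also a boundary point w of \<sigma>(T); as (T - w)_N is Fredholm and resolvent points
  accumulate at w, T - \<nu> is invertible on N for all \<nu> \<noteq> w near w.  Since w is not
  isolated in \<sigma>(T), some \<nu> \<in> \<sigma>(T) would make T - \<nu> invertible on M and on N, hence
  on X.  So \<sigma>_ap \<subseteq> \<sigma>_gKR, and all other inclusions hold for every operator.\<close>

interpretation cvs: vector_space "scaleC :: complex \<Rightarrow> 'a \<Rightarrow> 'a::cbanach"
  by unfold_locales (simp_all add: scaleC_add_right scaleC_add_left scaleC_scaleC scaleC_one)

interpretation cvp: vector_space_pair "scaleC :: complex \<Rightarrow> 'a \<Rightarrow> 'a::cbanach"
  "scaleC :: complex \<Rightarrow> 'a \<Rightarrow> 'a" ..

lemma csubspace_eq_subspace: "csubspace = cvs.subspace"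
  by (rule ext) (simp add: csubspace_def cvs.subspace_def)

lemma cspan_eq_span: "cspan = cvs.span"
  by (rule ext) (simp add: cspan_def cvs.span_def csubspace_eq_subspace)

lemma bounded_linear_scaleC_right: "bounded_linear (\<lambda>x::'a::cbanach. c *\<^sub>C x)"
proof (rule bounded_linear_intro[where K="cmod c"])
  show "c *\<^sub>C (x + y) = c *\<^sub>C x + c *\<^sub>C y" for x y :: 'a by (rule scaleC_add_right)
  show "c *\<^sub>C (r *\<^sub>R x) = r *\<^sub>R (c *\<^sub>C x)" for r and x :: 'a
    by (simp add: scaleR_scaleC scaleC_scaleC mult.commute)
  show "norm (c *\<^sub>C x) \<le> norm x * cmod c" for x :: 'a by (simp add: norm_scaleC)
qed

lemma bounded_linear_scaleC_left: "bounded_linear (\<lambda>k. k *\<^sub>C (b::'a::cbanach))"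
proof (rule bounded_linear_intro[where K="norm b"])
  show "(x + y) *\<^sub>C b = x *\<^sub>C b + y *\<^sub>C b" for x y by (rule scaleC_add_left)
  show "(r *\<^sub>R x) *\<^sub>C b = r *\<^sub>R (x *\<^sub>C b)" for r x
    by (simp add: scaleR_scaleC scaleC_scaleC scaleC_complex_def)
  show "norm (x *\<^sub>C b) \<le> norm x * norm b" for x by (simp add: norm_scaleC)
qed

lemma bounded_clinear_imp_bounded_linear: "bounded_clinear A \<Longrightarrow> bounded_linear A"
  by (simp add: bounded_clinear_def)

lemma bounded_clinear_scaleC: "bounded_clinear A \<Longrightarrow> A (c *\<^sub>C x) = c *\<^sub>C A x"
  by (simp add: bounded_clinear_def)

lemma bounded_clinear_0: "bounded_clinear A \<Longrightarrow> A 0 = 0"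
  by (simp add: bounded_clinear_def bounded_linear.linear linear_0)

lemma bounded_clinear_add: "bounded_clinear A \<Longrightarrow> A (x + y) = A x + A y"
  by (simp add: bounded_clinear_def bounded_linear.linear linear_add)

lemma bounded_clinear_diff: "bounded_clinear A \<Longrightarrow> A (x - y) = A x - A y"
  by (simp add: bounded_clinear_def bounded_linear.linear linear_diff)

lemma bounded_clinear_minus: "bounded_clinear A \<Longrightarrow> A (- x) = - A x"
  by (simp add: bounded_clinear_def bounded_linear.linear linear_neg)

lemma bounded_clinear_sum: "bounded_clinear A \<Longrightarrow> A (sum f I) = (\<Sum>i\<in>I. A (f i))"
  by (simp add: bounded_clinear_def bounded_linear.linear linear_sum)

lemma bounded_clinear_compose: "bounded_clinear A \<Longrightarrow> bounded_clinear B \<Longrightarrow> bounded_clinear (A \<circ> B)"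
  unfolding bounded_clinear_def using bounded_linear_compose by (auto simp: o_def)

lemma bounded_clinear_id: "bounded_clinear (id :: 'a::cbanach \<Rightarrow> 'a)"
  unfolding bounded_clinear_def by (simp add: bounded_linear_ident id_def)

lemma bounded_clinear_funpow: "bounded_clinear A \<Longrightarrow> bounded_clinear (A ^^ n)"
  by (induction n) (simp_all add: bounded_clinear_id bounded_clinear_compose)

lemma bounded_clinear_scaleC_right: "bounded_clinear (\<lambda>x::'a::cbanach. c *\<^sub>C x)"
  unfolding bounded_clinear_def
  by (simp add: bounded_linear_scaleC_right scaleC_scaleC mult.commute)

lemma bounded_clinear_opshift: "bounded_clinear A \<Longrightarrow> bounded_clinear (opshift A z)"
  unfolding bounded_clinear_def opshift_def
  by (auto intro!: bounded_linear_sub bounded_linear_scaleC_right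
      simp: scaleC_scaleC mult.commute cvs.scale_right_diff_distrib)

lemma opshift_opshift: "opshift (opshift A a) b = opshift A (a + b)"
  by (rule ext) (simp add: opshift_def scaleC_add_left)

lemma opshift_0: "opshift A 0 = A"
  by (rule ext) (simp add: opshift_def)

lemma opshift_eq_0_iff: "opshift A z x = 0 \<longleftrightarrow> A x = z *\<^sub>C x"
  by (simp add: opshift_def)

lemma funpow_eigenvector:
  assumes "bounded_clinear A" "A x = z *\<^sub>C x"
  shows "(A ^^ n) x = z ^ n *\<^sub>C x"
  by (induction n) (simp_all add: assms bounded_clinear_scaleC scaleC_scaleC scaleC_one mult.commute)

lemma csubspace_0: "csubspace M \<Longrightarrow> 0 \<in> M"
  by (simp add: csubspace_def)

lemma csubspace_add: "csubspace M \<Longrightarrow> x \<in> M \<Longrightarrow> y \<in> M \<Longrightarrow> x + y \<in> M"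
  by (simp add: csubspace_def)

lemma csubspace_scaleC: "csubspace M \<Longrightarrow> x \<in> M \<Longrightarrow> c *\<^sub>C x \<in> M"
  by (simp add: csubspace_def)

lemma csubspace_minus: "csubspace M \<Longrightarrow> x \<in> M \<Longrightarrow> - x \<in> M"
  unfolding csubspace_eq_subspace by (rule cvs.subspace_neg)

lemma csubspace_diff: "csubspace M \<Longrightarrow> x \<in> M \<Longrightarrow> y \<in> M \<Longrightarrow> x - y \<in> M"
  unfolding csubspace_eq_subspace by (rule cvs.subspace_diff)

lemma csubspace_scaleR: "csubspace M \<Longrightarrow> x \<in> M \<Longrightarrow> r *\<^sub>R x \<in> M"
  by (simp add: csubspace_scaleC scaleR_scaleC)

lemma csubspace_sum: "csubspace M \<Longrightarrow> (\<And>i. i \<in> I \<Longrightarrow> f i \<in> M) \<Longrightarrow> sum f I \<in> M"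
  unfolding csubspace_eq_subspace by (rule cvs.subspace_sum)

lemma csubspace_UNIV: "csubspace UNIV"
  by (simp add: csubspace_def)

lemma csubspace_zero: "csubspace {0}"
  by (simp add: csubspace_def cvs.scale_zero_right)

lemma csubspace_Int: "csubspace M \<Longrightarrow> csubspace N \<Longrightarrow> csubspace (M \<inter> N)"
  unfolding csubspace_eq_subspace by (rule cvs.subspace_inter)

lemma csubspace_INT: "(\<And>i. csubspace (M i)) \<Longrightarrow> csubspace (\<Inter>i. M i)"
  by (auto simp: csubspace_def)

lemma set_plus_eq_Collect: "M + N = {x + y |x y. x \<in> M \<and> y \<in> N}"
  by (auto simp: set_plus_def)

lemma csubspace_set_plus: "csubspace M \<Longrightarrow> csubspace N \<Longrightarrow> csubspace (M + N)"
  unfolding csubspace_eq_subspace set_plus_eq_Collect by (rule cvs.subspace_sums)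

lemma csubspace_cspan: "csubspace (cspan B)"
  by (simp add: csubspace_eq_subspace cspan_eq_span)

lemma cspan_minimal: "B \<subseteq> M \<Longrightarrow> csubspace M \<Longrightarrow> cspan B \<subseteq> M"
  unfolding cspan_eq_span csubspace_eq_subspace by (rule cvs.span_minimal)

lemma cspan_mono: "B \<subseteq> B' \<Longrightarrow> cspan B \<subseteq> cspan B'"
  unfolding cspan_eq_span by (rule cvs.span_mono)

lemma bounded_clinear_imp_clinear: "bounded_clinear A \<Longrightarrow> Vector_Spaces.linear scaleC scaleC A"
  by (simp add: Vector_Spaces.linear_iff bounded_clinear_add bounded_clinear_scaleC cvs.vector_space_axioms)

lemma csubspace_image: "bounded_clinear A \<Longrightarrow> csubspace M \<Longrightarrow> csubspace (A ` M)"
  unfolding csubspace_eq_subspace by (rule cvp.linear_subspace_image[OF bounded_clinear_imp_clinear])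

lemma csubspace_kernel: "bounded_clinear A \<Longrightarrow> csubspace M \<Longrightarrow> csubspace {x\<in>M. A x = 0}"
  unfolding csubspace_def by (auto simp: bounded_clinear_0 bounded_clinear_add bounded_clinear_scaleC cvs.scale_zero_right)

lemma cspan_image: "bounded_clinear A \<Longrightarrow> cspan (A ` B) = A ` cspan B"
  unfolding cspan_eq_span by (rule cvp.linear_span_image[OF bounded_clinear_imp_clinear])
lemma image_opshift_subset: "csubspace N \<Longrightarrow> A ` N \<subseteq> N \<Longrightarrow> opshift A z ` N \<subseteq> N"
  by (auto simp: opshift_def intro!: csubspace_diff csubspace_scaleC)

lemma funpow_image_subset: "A ` Y \<subseteq> Y \<Longrightarrow> (A ^^ n) ` Y \<subseteq> Y"
  by (induction n) auto

lemma funpow_image_antimono: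
  assumes "A ` Y \<subseteq> Y" "m \<le> n"
  shows "(A ^^ n) ` Y \<subseteq> (A ^^ m) ` Y"
proof -
  obtain k where "n = m + k" using assms(2) le_Suc_ex by blast
  then have "(A ^^ n) ` Y = (A ^^ m) ` (A ^^ k) ` Y" by (simp add: funpow_add image_comp)
  then show ?thesis using funpow_image_subset[OF assms(1), of k] by (simp add: image_mono)
qed

section \<open>Bounded below operators and the open mapping theorem\<close>

lemma bounded_below_on_kernel:
  assumes "bounded_below_on A Y" "x \<in> Y" "A x = 0"
  shows "x = 0"
proof -
  obtain c where "c > 0" "c * norm x \<le> norm (A x)"
    using assms(1,2) unfolding bounded_below_on_def by blast
  then show ?thesis using assms(3) by (simp add: mult_le_0_iff)
qed

lemma bounded_below_on_closed_image:
  fixes A :: "'a::cbanach \<Rightarrow> 'a"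
  assumes A: "bounded_clinear A" and Y: "closed Y" "csubspace Y" and bb: "bounded_below_on A Y"
  shows "closed (A ` Y)"
proof -
  obtain c where c: "c > 0" "\<forall>x\<in>Y. c * norm x \<le> norm (A x)"
    using bb unfolding bounded_below_on_def by blast
  have "subspace Y" using csubspace_scaleR[OF Y(2)] csubspace_0[OF Y(2)] csubspace_add[OF Y(2)]
    by (simp add: subspace_def)
  then have "complete (A ` Y)"
    using complete_isometric_image[OF c(1) _ bounded_clinear_imp_bounded_linear[OF A]] c(2) Y(1)
    by (simp add: complete_eq_closed)
  then show ?thesis by (rule complete_imp_closed)
qed

lemma bounded_below_on_opshift:
  assumes "\<forall>x\<in>N. c * norm x \<le> norm (A x)"
  shows "\<forall>x\<in>N. (c - cmod z) * norm x \<le> norm (opshift A z x)"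
proof
  fix x assume "x \<in> N"
  have "norm (A x) \<le> norm (opshift A z x) + cmod z * norm x"
    using norm_triangle_ineq[of "opshift A z x" "z *\<^sub>C x"] by (simp add: opshift_def norm_scaleC)
  moreover have "c * norm x \<le> norm (A x)" using assms \<open>x \<in> N\<close> by blast
  ultimately show "(c - cmod z) * norm x \<le> norm (opshift A z x)"
    by (simp add: left_diff_distrib)
qed

lemma baire_closure_image_ball:
  fixes A :: "'a::real_normed_vector \<Rightarrow> 'b::complete_space"
  assumes Zc: "closed (A ` Y)" and Y: "Y \<noteq> {}"
  shows "\<exists>k::nat. \<exists>z0 r. r > 0 \<and> z0 \<in> A ` Y
           \<and> (\<forall>z\<in>A ` Y. dist z z0 < r \<longrightarrow> z \<in> closure (A ` (Y \<inter> cball 0 (real k))))"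
proof -
  define Z where "Z = A ` Y"
  define F where "F k = Z \<inter> closure (A ` (Y \<inter> cball 0 (real k)))" for k :: nat
  have UF: "\<Union> (range F) = Z"
  proof
    show "Z \<subseteq> \<Union> (range F)"
    proof
      fix z assume "z \<in> Z"
      then obtain y where y: "y \<in> Y" "z = A y" by (auto simp: Z_def)
      obtain k :: nat where "norm y \<le> real k" using real_arch_simple by blast
      then have "z \<in> A ` (Y \<inter> cball 0 (real k))" using y by auto
      then have "z \<in> F k"
        using \<open>z \<in> Z\<close> closure_subset[of "A ` (Y \<inter> cball 0 (real k))"] by (auto simp: F_def)
      then show "z \<in> \<Union> (range F)" by blast
    qed
  qed (auto simp: F_def)
  have "\<exists>k. (top_of_set Z) interior_of (F k) \<noteq> {}"
  proof (rule ccontr)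
    assume H: "\<not> (\<exists>k. (top_of_set Z) interior_of (F k) \<noteq> {})"
    have "closedin euclidean Z" using Zc closed_closedin unfolding Z_def by blast
    then have "completely_metrizable_space (top_of_set Z)"
      by (rule completely_metrizable_space_closedin[OF completely_metrizable_space_euclidean])
    moreover have "closedin (top_of_set Z) T \<and> (top_of_set Z) interior_of T = {}" if T: "T \<in> range F" for T
    proof -
      obtain j where "T = F j" using T by blast
      moreover have "closedin (top_of_set Z) (Z \<inter> closure (A ` (Y \<inter> cball 0 (real j))))"
        by (rule closedin_closed_Int[OF closed_closure])
      moreover have "(top_of_set Z) interior_of (F j) = {}" using H by blast
      ultimately show ?thesis by (simp only: F_def)
    qed
    ultimately have "(top_of_set Z) interior_of \<Union>(range F) = {}"
      by (intro Baire_category_alt disjI1) auto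
    moreover have "(top_of_set Z) interior_of Z = Z"
      using interior_of_topspace[of "top_of_set Z"] by simp
    ultimately show False using UF Y by (simp add: Z_def)
  qed
  then obtain k z0 where z0: "z0 \<in> (top_of_set Z) interior_of (F k)" by blast
  then obtain r where r: "r > 0" "\<forall>z\<in>Z. dist z z0 < r \<longrightarrow> z \<in> (top_of_set Z) interior_of (F k)"
    using openin_interior_of[of "top_of_set Z" "F k"] unfolding openin_euclidean_subtopology_iff by blast
  have "z0 \<in> Z" "\<forall>z\<in>Z. dist z z0 < r \<longrightarrow> z \<in> closure (A ` (Y \<inter> cball 0 (real k)))"
    using z0 r(2) interior_of_subset[of "top_of_set Z" "F k"] by (auto simp: F_def)
  then show ?thesis using r(1) unfolding Z_def by blast
qed

lemma closure_image_cball_contains_ball: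
  fixes A :: "'a::cbanach \<Rightarrow> 'a"
  assumes A: "bounded_clinear A" and Y: "csubspace Y" and Zc: "closed (A ` Y)"
  shows "\<exists>R\<ge>0. \<exists>r>0. \<forall>z\<in>A ` Y. norm z < r \<longrightarrow> z \<in> closure (A ` (Y \<inter> cball 0 R))"
proof -
  define Z where "Z = A ` Y"
  have Zs: "csubspace Z" unfolding Z_def by (rule csubspace_image[OF A Y])
  obtain k :: nat and z0 r where r: "r > 0" and z0: "z0 \<in> Z"
    and ball: "\<forall>z\<in>Z. dist z z0 < r \<longrightarrow> z \<in> closure (A ` (Y \<inter> cball 0 (real k)))"
    using baire_closure_image_ball[OF Zc] csubspace_0[OF Y] unfolding Z_def by blast
  have "z \<in> closure (A ` (Y \<inter> cball 0 (2 * real k)))" if z: "z \<in> Z" "norm z < r" for z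
    unfolding closure_approachable
  proof (intro allI impI)
    fix e :: real assume e: "e > 0"
    \<comment> \<open>Differences of approximations of z0 + z and of z0 approximate z.\<close>
    have "z0 + z \<in> closure (A ` (Y \<inter> cball 0 (real k)))"
      using ball csubspace_add[OF Zs z0 z(1)] z(2) by (simp add: dist_norm)
    then obtain w where "w \<in> A ` (Y \<inter> cball 0 (real k))" "dist w (z0 + z) < e/2"
      using half_gt_zero[OF e] unfolding closure_approachable by blast
    then obtain y1 where y1: "y1 \<in> Y" "norm y1 \<le> real k" "dist (A y1) (z0 + z) < e/2" by auto
    have "z0 \<in> closure (A ` (Y \<inter> cball 0 (real k)))" using ball z0 r by simp
    then obtain w where "w \<in> A ` (Y \<inter> cball 0 (real k))" "dist w z0 < e/2"
      using half_gt_zero[OF e] unfolding closure_approachable by blast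
    then obtain y2 where y2: "y2 \<in> Y" "norm y2 \<le> real k" "dist (A y2) z0 < e/2" by auto
    have "A (y1 - y2) - z = (A y1 - (z0 + z)) - (A y2 - z0)"
      using bounded_clinear_diff[OF A] by (simp add: algebra_simps)
    then have "norm (A (y1 - y2) - z) \<le> norm (A y1 - (z0 + z)) + norm (A y2 - z0)"
      by (metis norm_triangle_ineq4)
    then have "dist (A (y1 - y2)) z < e" using y1(3) y2(3) by (simp add: dist_norm)
    moreover have "norm (y1 - y2) \<le> 2 * real k"
      using norm_triangle_ineq4[of y1 y2] y1(2) y2(2) by simp
    ultimately show "\<exists>w\<in>A ` (Y \<inter> cball 0 (2 * real k)). dist w z < e"
      using csubspace_diff[OF Y y1(1) y2(1)] by auto
  qed
  then show ?thesis using r unfolding Z_def by (intro exI[of _ "2 * real k"]) auto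
qed

lemma open_mapping_approx:
  fixes A :: "'a::cbanach \<Rightarrow> 'a"
  assumes A: "bounded_clinear A" and Y: "csubspace Y" and Zc: "closed (A ` Y)"
  shows "\<exists>K\<ge>0. \<forall>z\<in>A ` Y. \<exists>y\<in>Y. norm y \<le> K * norm z \<and> norm (z - A y) \<le> norm z / 2"
proof -
  obtain R r where "R \<ge> 0" "r > 0" and ball: "\<forall>z\<in>A ` Y. norm z < r \<longrightarrow> z \<in> closure (A ` (Y \<inter> cball 0 R))"
    using closure_image_cball_contains_ball[OF A Y Zc] by blast
  define K where "K = 2 * R / r"
  have "\<exists>y\<in>Y. norm y \<le> K * norm z \<and> norm (z - A y) \<le> norm z / 2" if z: "z \<in> A ` Y" for z
  proof (cases "z = 0")
    case True
    then show ?thesis using csubspace_0[OF Y] bounded_clinear_0[OF A] by force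
  next
    case False
    define t where "t = r / (2 * norm z)"
    have t: "t > 0" using \<open>r > 0\<close> False by (simp add: t_def)
    have "t *\<^sub>R z \<in> A ` Y" using csubspace_scaleR[OF csubspace_image[OF A Y] z] .
    moreover have "norm (t *\<^sub>R z) < r" using False \<open>r > 0\<close> by (simp add: t_def)
    ultimately have "t *\<^sub>R z \<in> closure (A ` (Y \<inter> cball 0 R))" using ball by blast
    then obtain w where "w \<in> A ` (Y \<inter> cball 0 R)" "dist w (t *\<^sub>R z) < r / 4"
      using \<open>r > 0\<close> unfolding closure_approachable by (meson zero_less_divide_iff zero_less_numeral)
    then obtain y' where y': "y' \<in> Y" "norm y' \<le> R" "norm (A y' - t *\<^sub>R z) < r / 4"
      by (auto simp: dist_norm)
    define y where "y = (1/t) *\<^sub>R y'"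
    have "norm y \<le> R / t" using y'(2) t by (simp add: y_def divide_right_mono)
    also have "\<dots> = K * norm z" using \<open>r > 0\<close> False by (simp add: t_def K_def field_simps)
    finally have ny: "norm y \<le> K * norm z" .
    have "z - A y = (1/t) *\<^sub>R (t *\<^sub>R z - A y')"
      using t bounded_clinear_scaleC[OF A] by (simp add: y_def scaleR_scaleC algebra_simps)
    then have "norm (z - A y) = norm (A y' - t *\<^sub>R z) / t"
      using t by (simp add: norm_minus_commute)
    also have "\<dots> \<le> (r/4) / t" using y'(3) t by (intro divide_right_mono) auto
    also have "\<dots> = norm z / 2" using \<open>r > 0\<close> False by (simp add: t_def field_simps)
    finally have "norm (z - A y) \<le> norm z / 2" .
    moreover have "y \<in> Y" unfolding y_def by (rule csubspace_scaleR[OF Y y'(1)])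
    ultimately show ?thesis using ny by blast
  qed
  moreover have "K \<ge> 0" using \<open>r > 0\<close> \<open>R \<ge> 0\<close> by (simp add: K_def)
  ultimately show ?thesis by blast
qed

lemma suminf_in_closed_csubspace:
  assumes "closed Y" "csubspace Y" "summable f" "\<And>n. f n \<in> Y"
  shows "suminf f \<in> Y"
  using assms(1) summable_LIMSEQ[OF assms(3)] csubspace_sum[OF assms(2)] assms(4)
  by (metis closed_sequentially)

text \<open>Iterating the approximation halves the error at each step; the
  approximating preimages form a convergent geometric series.\<close>

lemma preimage_of_halving_approximation:
  fixes A :: "'a::cbanach \<Rightarrow> 'a"
  assumes A: "bounded_clinear A" and Y: "closed Y" "csubspace Y" and K: "K \<ge> 0"
    and g: "\<And>z. z \<in> A ` Y \<Longrightarrow> g z \<in> Y \<and> norm (g z) \<le> K * norm z \<and> norm (z - A (g z)) \<le> norm z / 2"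
    and z: "z \<in> A ` Y"
  shows "\<exists>y\<in>Y. A y = z \<and> norm y \<le> (2*K + 1) * norm z"
proof -
  define zs where "zs n = ((\<lambda>w. w - A (g w)) ^^ n) z" for n
  have zsS: "zs (Suc n) = zs n - A (g (zs n))" for n by (simp add: zs_def)
  have zsZ: "zs n \<in> A ` Y" for n
  proof (induction n)
    case (Suc n)
    have "A (g (zs n)) \<in> A ` Y" using g[OF Suc] by blast
    then show ?case using zsS csubspace_diff[OF csubspace_image[OF A Y(2)] Suc] by simp
  qed (simp add: zs_def z)
  have zsn: "norm (zs n) \<le> norm z * (1/2)^n" for n
  proof (induction n)
    case (Suc n)
    then show ?case using g[OF zsZ[of n]] zsS[of n] by simp
  qed (simp add: zs_def)
  define ys where "ys n = g (zs n)" for n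
  have nys: "norm (ys n) \<le> K * norm z * (1/2)^n" for n
  proof -
    have "norm (ys n) \<le> K * norm (zs n)" using g[OF zsZ[of n]] by (simp add: ys_def)
    also have "\<dots> \<le> K * (norm z * (1/2)^n)" by (rule mult_left_mono[OF zsn K(1)])
    finally show ?thesis by simp
  qed
  have sg: "summable (\<lambda>n. K * norm z * (1/2::real)^n)"
    by (intro summable_mult summable_geometric) simp
  have sn: "summable (\<lambda>n. norm (ys n))"
    by (rule summable_comparison_test[OF _ sg]) (use nys in auto)
  have s: "summable ys" by (rule summable_norm_cancel[OF sn])
  have "suminf ys \<in> Y"
    using suminf_in_closed_csubspace[OF Y s] g zsZ by (simp add: ys_def)
  moreover have "norm (suminf ys) \<le> (2*K + 1) * norm z"
  proof -
    have "norm (suminf ys) \<le> (\<Sum>n. K * norm z * (1/2)^n)"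
      using summable_norm[OF sn] suminf_le[OF nys sn sg] by linarith
    also have "\<dots> = 2 * K * norm z"
      using suminf_mult[OF summable_geometric[of "1/2::real"]] suminf_geometric[of "1/2::real"] by simp
    finally have "norm (suminf ys) \<le> 2 * K * norm z" .
    moreover have "2 * K * norm z \<le> (2*K + 1) * norm z" by (simp add: distrib_right)
    ultimately show ?thesis by linarith
  qed
  moreover have "A (suminf ys) = z"
  proof -
    have "(\<lambda>n. norm z * (1/2::real)^n) \<longlonglongrightarrow> 0"
      by (intro tendsto_mult_right_zero LIMSEQ_power_zero) simp
    then have "zs \<longlonglongrightarrow> 0" by (rule Lim_null_comparison[rotated]) (use zsn in auto)
    then have "(\<lambda>n. zs n - zs (Suc n)) sums zs 0" using telescope_sums' by fastforce
    then have "(\<lambda>n. A (ys n)) sums z" by (simp add: ys_def zsS zs_def)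
    then show ?thesis
      using bounded_linear.suminf[OF bounded_clinear_imp_bounded_linear[OF A] s] sums_unique by metis
  qed
  ultimately show ?thesis by blast
qed

lemma open_mapping_on:
  fixes A :: "'a::cbanach \<Rightarrow> 'a"
  assumes A: "bounded_clinear A" and Y: "closed Y" "csubspace Y" and Zc: "closed (A ` Y)"
  shows "\<exists>C>0. \<forall>z\<in>A ` Y. \<exists>y\<in>Y. A y = z \<and> norm y \<le> C * norm z"
proof -
  obtain K where K: "K \<ge> 0" "\<forall>z\<in>A ` Y. \<exists>y\<in>Y. norm y \<le> K * norm z \<and> norm (z - A y) \<le> norm z / 2"
    using open_mapping_approx[OF A Y(2) Zc] by blast
  then obtain g where "\<And>z. z \<in> A ` Y \<Longrightarrow> g z \<in> Y \<and> norm (g z) \<le> K * norm z \<and> norm (z - A (g z)) \<le> norm z / 2"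
    by metis
  then have "\<forall>z\<in>A ` Y. \<exists>y\<in>Y. A y = z \<and> norm y \<le> (2*K + 1) * norm z"
    using preimage_of_halving_approximation[OF A Y K(1)] by blast
  moreover have "2*K + 1 > 0" using K(1) by simp
  ultimately show ?thesis by blast
qed

lemma bounded_below_onI:
  fixes A :: "'a::cbanach \<Rightarrow> 'a"
  assumes A: "bounded_clinear A" and Y: "closed Y" "csubspace Y" and Zc: "closed (A ` Y)"
    and inj: "\<forall>x\<in>Y. A x = 0 \<longrightarrow> x = 0"
  shows "bounded_below_on A Y"
proof -
  obtain C where C: "C > 0" "\<forall>z\<in>A ` Y. \<exists>y\<in>Y. A y = z \<and> norm y \<le> C * norm z"
    using open_mapping_on[OF A Y Zc] by blast
  have "(1/C) * norm x \<le> norm (A x)" if x: "x \<in> Y" for x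
  proof -
    obtain y where y: "y \<in> Y" "A y = A x" "norm y \<le> C * norm (A x)" using C(2) x by blast
    have "A (y - x) = 0" using y(2) bounded_clinear_diff[OF A, of y x] by simp
    then have "y - x = 0" using inj csubspace_diff[OF Y(2) y(1) x] by blast
    then have "y = x" by simp
    then show ?thesis using y(3) C(1) by (simp add: field_simps)
  qed
  then show ?thesis unfolding bounded_below_on_def using C(1) by (intro exI[of _ "1/C"]) auto
qed

section \<open>Invertibility on closed invariant subspaces\<close>

lemma invertible_on_iff:
  fixes A :: "'a::cbanach \<Rightarrow> 'a"
  assumes A: "bounded_clinear A" and N: "closed N" "csubspace N" and AN: "A ` N \<subseteq> N"
  shows "invertible_on A N \<longleftrightarrow> (\<forall>x\<in>N. A x = 0 \<longrightarrow> x = 0) \<and> N \<subseteq> A ` N"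
proof
  assume "invertible_on A N"
  then obtain R where R: "R ` N \<subseteq> N" "\<forall>x\<in>N. R (A x) = x \<and> A (R x) = x"
    unfolding invertible_on_def by blast
  have "R 0 = 0" using R(2) csubspace_0[OF N(2)] bounded_clinear_0[OF A] by metis
  then have "\<forall>x\<in>N. A x = 0 \<longrightarrow> x = 0" using R(2) by metis
  moreover have "N \<subseteq> A ` N" using R by (metis image_subset_iff subsetI imageI)
  ultimately show "(\<forall>x\<in>N. A x = 0 \<longrightarrow> x = 0) \<and> N \<subseteq> A ` N" ..
next
  assume "(\<forall>x\<in>N. A x = 0 \<longrightarrow> x = 0) \<and> N \<subseteq> A ` N"
  then have inj: "\<forall>x\<in>N. A x = 0 \<longrightarrow> x = 0" and eq: "A ` N = N" using AN by auto
  obtain c where c: "c > 0" "\<forall>x\<in>N. c * norm x \<le> norm (A x)"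
    using bounded_below_onI[OF A N _ inj] eq N(1) unfolding bounded_below_on_def by auto
  have "inj_on A N"
  proof (rule inj_onI)
    fix x y assume "x \<in> N" "y \<in> N" "A x = A y"
    then show "x = y" using inj csubspace_diff[OF N(2)] bounded_clinear_diff[OF A, of x y] by force
  qed
  define R where "R = inv_into N A"
  have "R y \<in> N" "A (R y) = y" "norm (R y) \<le> (1/c) * norm y" if "y \<in> N" for y
    using that eq inv_into_into[of y A N] f_inv_into_f[of y A N] c by (auto simp: R_def field_simps)
  moreover have "R (A x) = x" if "x \<in> N" for x using inv_into_f_f[OF \<open>inj_on A N\<close> that] by (simp add: R_def)
  ultimately show "invertible_on A N" unfolding invertible_on_def by blast
qed

lemma invertible_on_imp_bounded_below_on:
  fixes A :: "'a::cbanach \<Rightarrow> 'a"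
  assumes A: "bounded_clinear A" and N: "closed N" "csubspace N" and AN: "A ` N \<subseteq> N"
    and inv: "invertible_on A N"
  shows "bounded_below_on A N"
proof -
  have inj: "\<forall>x\<in>N. A x = 0 \<longrightarrow> x = 0" and surj: "N \<subseteq> A ` N"
    using inv by (simp_all add: invertible_on_iff[OF A N AN])
  have "A ` N = N" using AN surj by (rule subset_antisym)
  then show ?thesis using bounded_below_onI[OF A N _ inj] N(1) by simp
qed

text \<open>Solving (A - \<delta>) x = n is a fixed point problem for x \<mapsto> A\<inverse>(n + \<delta> x), a
  contraction when |\<delta>| is below the lower bound of A.\<close>

lemma surj_on_opshift_small:
  fixes A :: "'a::cbanach \<Rightarrow> 'a"
  assumes A: "bounded_clinear A" and N: "closed N" "csubspace N" and AN: "A ` N \<subseteq> N"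
    and c: "\<forall>x\<in>N. c * norm x \<le> norm (A x)" and surj: "N \<subseteq> A ` N" and d: "cmod \<delta> < c"
  shows "N \<subseteq> opshift A \<delta> ` N"
proof
  fix n assume n: "n \<in> N"
  define R where "R = inv_into N A"
  have R: "R y \<in> N" "A (R y) = y" if "y \<in> N" for y
    using that AN surj inv_into_into[of y A N] f_inv_into_f[of y A N] by (auto simp: R_def)
  define f where "f x = R (n + \<delta> *\<^sub>C x)" for x
  have u: "n + \<delta> *\<^sub>C x \<in> N" if "x \<in> N" for x
    using csubspace_add[OF N(2) n csubspace_scaleC[OF N(2) that]] .
  have fN: "f ` N \<subseteq> N" using R(1) u by (auto simp: f_def)
  have c0: "c > 0" using d norm_ge_zero[of \<delta>] by linarith
  have lip: "dist (f x) (f y) \<le> (cmod \<delta> / c) * dist x y" if "x \<in> N" "y \<in> N" for x y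
  proof -
    have "c * norm (f x - f y) \<le> norm (A (f x - f y))"
      using c csubspace_diff[OF N(2) fN[THEN subsetD] fN[THEN subsetD]] that by blast
    also have "\<dots> = norm (\<delta> *\<^sub>C x - \<delta> *\<^sub>C y)"
      using R(2)[OF u[OF that(1)]] R(2)[OF u[OF that(2)]] bounded_clinear_diff[OF A] by (simp add: f_def)
    also have "\<dots> = cmod \<delta> * norm (x - y)" by (metis cvs.scale_right_diff_distrib norm_scaleC)
    finally show ?thesis using c0 by (simp add: dist_norm field_simps)
  qed
  obtain x where x: "x \<in> N" "f x = x"
    using Banach_fix[OF _ _ _ _ fN lip] N(1) n c0 d by (auto simp: complete_eq_closed)
  then have "A x = n + \<delta> *\<^sub>C x" using R(2)[OF u[OF x(1)]] by (simp add: f_def)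
  then show "n \<in> opshift A \<delta> ` N" using x(1) by (force simp: opshift_def)
qed

text \<open>On a connected set of spectral parameters where A - \<nu> stays bounded below,
  surjectivity of A - \<nu> is locally constant by the previous lemma, hence constant.\<close>

lemma invertible_on_opshift_connected:
  fixes A :: "'a::cbanach \<Rightarrow> 'a"
  assumes A: "bounded_clinear A" and N: "closed N" "csubspace N" and AN: "A ` N \<subseteq> N"
    and D: "connected D" and bb: "\<And>\<nu>. \<nu> \<in> D \<Longrightarrow> bounded_below_on (opshift A \<nu>) N"
    and \<nu>0: "\<nu>0 \<in> D" "N \<subseteq> opshift A \<nu>0 ` N"
  shows "\<forall>\<nu>\<in>D. invertible_on (opshift A \<nu>) N"
proof
  fix \<nu> assume \<nu>: "\<nu> \<in> D"
  have inv: "opshift A \<mu> ` N \<subseteq> N" for \<mu> by (rule image_opshift_subset[OF N(2) AN])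
  have local: "N \<subseteq> opshift A \<mu>' ` N \<longleftrightarrow> N \<subseteq> opshift A \<mu> ` N"
    if b: "\<forall>x\<in>N. b * norm x \<le> norm (opshift A \<mu> x)" and d: "dist \<mu>' \<mu> < b/2" for \<mu> \<mu>' b
  proof -
    have shift: "opshift (opshift A \<mu>) (\<mu>' - \<mu>) = opshift A \<mu>'"
      "opshift (opshift A \<mu>') (\<mu> - \<mu>') = opshift A \<mu>"
      by (simp_all add: opshift_opshift)
    have b': "\<forall>x\<in>N. (b - cmod (\<mu>' - \<mu>)) * norm x \<le> norm (opshift A \<mu>' x)"
      using bounded_below_on_opshift[OF b, of "\<mu>' - \<mu>"] shift(1) by simp
    have small: "cmod (\<mu>' - \<mu>) < b/2" using d by (simp add: dist_norm)
    show ?thesis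
    proof
      assume "N \<subseteq> opshift A \<mu>' ` N"
      from surj_on_opshift_small[OF bounded_clinear_opshift[OF A] N inv b' this, of "\<mu> - \<mu>'"]
      show "N \<subseteq> opshift A \<mu> ` N" using small shift by (simp add: norm_minus_commute)
    next
      assume "N \<subseteq> opshift A \<mu> ` N"
      from surj_on_opshift_small[OF bounded_clinear_opshift[OF A] N inv b this, of "\<mu>' - \<mu>"]
      show "N \<subseteq> opshift A \<mu>' ` N" using small shift norm_ge_zero[of "\<mu>' - \<mu>"] by simp
    qed
  qed
  have "N \<subseteq> opshift A \<nu> ` N"
  proof (rule connected_induction_simple[OF D \<nu>0(1) \<nu>, where P = "\<lambda>\<mu>. N \<subseteq> opshift A \<mu> ` N"])
    show "N \<subseteq> opshift A \<nu>0 ` N" by (rule \<nu>0(2))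
    fix a assume "a \<in> D"
    then obtain b where b: "b > 0" "\<forall>x\<in>N. b * norm x \<le> norm (opshift A a x)"
      using bb unfolding bounded_below_on_def by blast
    have "\<forall>x\<in>D \<inter> ball a (b/2). \<forall>y\<in>D \<inter> ball a (b/2). N \<subseteq> opshift A x ` N \<longrightarrow> N \<subseteq> opshift A y ` N"
      using local[OF b(2)] by (auto simp: dist_commute)
    moreover have "openin (top_of_set D) (D \<inter> ball a (b/2))" by (simp add: openin_open_Int)
    ultimately show "\<exists>T. openin (top_of_set D) T \<and> a \<in> T \<and>
        (\<forall>x\<in>T. \<forall>y\<in>T. N \<subseteq> opshift A x ` N \<longrightarrow> N \<subseteq> opshift A y ` N)"
      using \<open>a \<in> D\<close> b(1) by (intro exI[of _ "D \<inter> ball a (b/2)"]) auto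
  qed
  then show "invertible_on (opshift A \<nu>) N"
    using invertible_on_iff[OF bounded_clinear_opshift[OF A] N inv] bounded_below_on_kernel[OF bb[OF \<nu>]]
    by blast
qed

lemma reducing_pair_opshift: "reducing_pair S M N \<Longrightarrow> reducing_pair (opshift S z) M N"
  by (simp add: reducing_pair_def image_opshift_subset)

lemma reducing_pair_sym: "reducing_pair S M N \<Longrightarrow> reducing_pair S N M"
  unfolding reducing_pair_def by (metis add.commute inf_commute)

lemma reducing_pair_image_surj:
  fixes A :: "'a::cbanach \<Rightarrow> 'a"
  assumes A: "bounded_clinear A" and MN: "reducing_pair A M N"
    and inj: "\<forall>x. A x = 0 \<longrightarrow> x = 0" and surj: "surj A"
  shows "M \<subseteq> A ` M"
proof
  fix m assume m: "m \<in> M"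
  have M: "csubspace M" "A ` M \<subseteq> M" and N: "A ` N \<subseteq> N" and MN0: "M \<inter> N = {0}"
    and dec: "\<forall>x. \<exists>m\<in>M. \<exists>n\<in>N. x = m + n"
    using MN unfolding reducing_pair_def by auto
  obtain x where x: "m = A x" using surj by (metis surjD)
  obtain a b where ab: "a \<in> M" "b \<in> N" "x = a + b" using dec by blast
  have "A b = m - A a" using x ab bounded_clinear_add[OF A] by simp
  moreover have "A a \<in> M" using M(2) ab(1) by blast
  ultimately have "A b \<in> M" using csubspace_diff[OF M(1) m] by simp
  moreover have "A b \<in> N" using N ab(2) by blast
  ultimately have "A b = 0" using MN0 by blast
  then have "b = 0" using inj by blast
  then show "m \<in> A ` M" using x ab by simp
qed

lemma reducing_pair_invertible_iff:
  fixes A :: "'a::cbanach \<Rightarrow> 'a"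
  assumes A: "bounded_clinear A" and MN: "reducing_pair A M N"
  shows "invertible_on A UNIV \<longleftrightarrow> invertible_on A M \<and> invertible_on A N"
proof -
  have M: "closed M" "csubspace M" "A ` M \<subseteq> M" and N: "closed N" "csubspace N" "A ` N \<subseteq> N"
    and MN0: "M \<inter> N = {0}" and dec: "\<forall>x. \<exists>m\<in>M. \<exists>n\<in>N. x = m + n"
    using MN unfolding reducing_pair_def by auto
  note iff_UNIV = invertible_on_iff[OF A closed_UNIV csubspace_UNIV, simplified]
  note iff_M = invertible_on_iff[OF A M] and iff_N = invertible_on_iff[OF A N]
  show ?thesis
  proof
    assume "invertible_on A UNIV"
    then have inj: "\<forall>x. A x = 0 \<longrightarrow> x = 0" and surj: "surj A" using iff_UNIV by auto
    moreover have "M \<subseteq> A ` M" by (rule reducing_pair_image_surj[OF A MN inj surj])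
    moreover have "N \<subseteq> A ` N" by (rule reducing_pair_image_surj[OF A reducing_pair_sym[OF MN] inj surj])
    ultimately show "invertible_on A M \<and> invertible_on A N" using iff_M iff_N by simp
  next
    assume inv: "invertible_on A M \<and> invertible_on A N"
    then have injM: "\<forall>x\<in>M. A x = 0 \<longrightarrow> x = 0" and surjM: "M \<subseteq> A ` M"
      and injN: "\<forall>x\<in>N. A x = 0 \<longrightarrow> x = 0" and surjN: "N \<subseteq> A ` N"
      by (simp_all add: iff_M iff_N)
    have "x = 0" if "A x = 0" for x
    proof -
      obtain a b where ab: "a \<in> M" "b \<in> N" "x = a + b" using dec by blast
      then have "A a = - A b" using that bounded_clinear_add[OF A, of a b] by (simp add: eq_neg_iff_add_eq_0)
      moreover have "- A b \<in> N" using csubspace_minus[OF N(2)] N(3) ab(2) by blast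
      ultimately have "A a \<in> N" by simp
      moreover have "A a \<in> M" using M(3) ab(1) by blast
      ultimately have Aa: "A a = 0" using MN0 by blast
      then have Ab: "A b = 0" using \<open>A a = - A b\<close> by simp
      have "a = 0" using injM ab(1) Aa by blast
      moreover have "b = 0" using injN ab(2) Ab by blast
      ultimately show ?thesis using ab(3) by simp
    qed
    moreover have "y \<in> range A" for y
    proof -
      obtain m n where mn: "m \<in> M" "n \<in> N" "y = m + n" using dec by blast
      from subsetD[OF surjM mn(1)] obtain a where "m = A a" by blast
      moreover from subsetD[OF surjN mn(2)] obtain b where "n = A b" by blast
      ultimately have "y = A (a + b)" using mn(3) bounded_clinear_add[OF A] by simp
      then show ?thesis by simp
    qed
    ultimately show "invertible_on A UNIV" using iff_UNIV by auto
  qed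
qed

section \<open>Closed subspaces plus finite-dimensional ones\<close>

lemma infdist_le_norm_add_scaleC:
  fixes V :: "'a::cbanach set"
  assumes V: "csubspace V" and v: "v \<in> V"
  shows "cmod k * infdist b V \<le> norm (v + k *\<^sub>C b)"
proof (cases "k = 0")
  case False
  have "- ((1/k) *\<^sub>C v) \<in> V" using csubspace_minus[OF V csubspace_scaleC[OF V v]] .
  then have "infdist b V \<le> dist b (- ((1/k) *\<^sub>C v))" by (rule infdist_le)
  moreover have "v + k *\<^sub>C b = k *\<^sub>C ((1/k) *\<^sub>C v + b)"
    using False by (simp add: scaleC_add_right scaleC_scaleC scaleC_one)
  then have "norm (v + k *\<^sub>C b) = cmod k * dist b (- ((1/k) *\<^sub>C v))"
    by (simp add: norm_scaleC dist_norm add.commute)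
  ultimately show ?thesis by (simp add: mult_left_mono)
qed simp

lemma closed_set_plus_cspan_singleton:
  fixes V :: "'a::cbanach set"
  assumes V: "closed V" "csubspace V"
  shows "closed (V + cspan {b})"
proof (cases "b \<in> V")
  case True
  have "cspan {b} \<subseteq> V" using cspan_minimal[OF _ V(2)] True by simp
  then have "V + cspan {b} = V"
    using csubspace_add[OF V(2)] csubspace_0[OF csubspace_cspan, of "{b}"]
    by (auto simp: set_plus_def) (metis add.right_neutral)
  then show ?thesis using V(1) by simp
next
  case False
  define d where "d = infdist b V"
  have d: "d > 0" unfolding d_def using infdist_pos_not_in_closed[OF V(1) _ False] csubspace_0[OF V(2)] by blast
  show ?thesis
  proof (unfold closed_sequential_limits, intro allI impI, elim conjE)
    fix s z assume sS: "\<forall>n. s n \<in> V + cspan {b}" and sz: "s \<longlonglongrightarrow> z"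
    have "\<forall>n. \<exists>v k. v \<in> V \<and> s n = v + k *\<^sub>C b"
      using sS unfolding set_plus_def cspan_eq_span cvs.span_singleton by blast
    then obtain v k where vk: "\<And>n. v n \<in> V" "\<And>n. s n = v n + k n *\<^sub>C b" by metis
    have "Cauchy k"
    proof (rule CauchyI)
      fix e :: real assume "e > 0"
      then obtain M where M: "\<forall>m\<ge>M. \<forall>n\<ge>M. norm (s m - s n) < d * e"
        using CauchyD[OF LIMSEQ_imp_Cauchy[OF sz]] d by (metis mult_pos_pos)
      have "norm (k m - k n) < e" if "m \<ge> M" "n \<ge> M" for m n
      proof -
        have "s m - s n = (v m - v n) + (k m - k n) *\<^sub>C b"
          using vk(2) by (simp add: algebra_simps cvs.scale_left_diff_distrib)
        then have "cmod (k m - k n) * d \<le> norm (s m - s n)"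
          using infdist_le_norm_add_scaleC[OF V(2) csubspace_diff[OF V(2) vk(1) vk(1)]] by (simp add: d_def)
        also have "\<dots> < d * e" using M that by blast
        finally show ?thesis using d by (simp add: mult.commute)
      qed
      then show "\<exists>M. \<forall>m\<ge>M. \<forall>n\<ge>M. norm (k m - k n) < e" by blast
    qed
    then obtain k0 where k0: "k \<longlonglongrightarrow> k0" using Cauchy_convergent_iff convergent_def by blast
    have "(\<lambda>n. s n - k n *\<^sub>C b) \<longlonglongrightarrow> z - k0 *\<^sub>C b"
      using bounded_linear.tendsto[OF bounded_linear_scaleC_left k0] sz by (intro tendsto_diff)
    then have "v \<longlonglongrightarrow> z - k0 *\<^sub>C b" using vk(2) by simp
    then have "z - k0 *\<^sub>C b \<in> V" using V(1) vk(1) closed_sequentially by blast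
    moreover have "k0 *\<^sub>C b \<in> cspan {b}"
      unfolding cspan_eq_span cvs.span_singleton by (rule rangeI)
    ultimately show "z \<in> V + cspan {b}" using set_plus_intro by fastforce
  qed
qed

lemma closed_set_plus_cspan:
  fixes V :: "'a::cbanach set"
  assumes V: "closed V" "csubspace V" and B: "finite B"
  shows "closed (V + cspan B)"
  using B
proof (induction B rule: finite_induct)
  case empty
  then show ?case using V(1) by (simp add: cspan_eq_span)
next
  case (insert b B)
  have "cspan (insert b B) = cspan {b} + cspan B"
    using cvs.span_Un[of "{b}" B] by (simp add: cspan_eq_span set_plus_eq_Collect)
  then have "V + cspan (insert b B) = (V + cspan B) + cspan {b}"
    by (simp add: ac_simps)
  then show ?case
    using closed_set_plus_cspan_singleton[OF insert.IH csubspace_set_plus[OF V(2) csubspace_cspan]] by simp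
qed

text \<open>A preimage of a convergent sequence in A ` W is found by correcting a fixed
  preimage of the limit with preimages of bounded norm (open mapping in N); the
  corrections stay in W because W contains the kernel.\<close>

lemma closed_image_subspace_containing_kernel:
  fixes A :: "'a::cbanach \<Rightarrow> 'a"
  assumes A: "bounded_clinear A" and N: "closed N" "csubspace N" and Nc: "closed (A ` N)"
    and W: "W \<subseteq> N" "closed W" "csubspace W" and ker: "{x\<in>N. A x = 0} \<subseteq> W"
  shows "closed (A ` W)"
proof (unfold closed_sequential_limits, intro allI impI, elim conjE)
  obtain C where C: "\<forall>z\<in>A ` N. \<exists>y\<in>N. A y = z \<and> norm y \<le> C * norm z"
    using open_mapping_on[OF A N Nc] by blast
  fix s z assume sW: "\<forall>n. s n \<in> A ` W" and sz: "s \<longlonglongrightarrow> z"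
  have "\<forall>n. \<exists>w. w \<in> W \<and> s n = A w" using sW by blast
  then obtain w where w: "\<And>n. w n \<in> W" "\<And>n. s n = A (w n)" by metis
  have "s n \<in> A ` N" for n using w W(1) by blast
  then have "z \<in> A ` N" using closed_sequentially[OF Nc _ sz] by blast
  then obtain v where v: "v \<in> N" "z = A v" by blast
  have "\<exists>u. u \<in> N \<and> A u = s n - z \<and> norm u \<le> C * norm (s n - z)" for n
  proof -
    have "s n - z = A (w n - v)" using w(2) v(2) bounded_clinear_diff[OF A, of "w n" v] by simp
    moreover have "w n - v \<in> N" using csubspace_diff[OF N(2) _ v(1)] w(1) W(1) by blast
    ultimately show ?thesis using C by blast
  qed
  then obtain u where u: "\<And>n. u n \<in> N" "\<And>n. A (u n) = s n - z" "\<And>n. norm (u n) \<le> C * norm (s n - z)"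
    by metis
  have "(\<lambda>n. C * norm (s n - z)) \<longlonglongrightarrow> 0"
    using sz by (intro tendsto_mult_right_zero tendsto_norm_zero) (simp add: LIM_zero)
  then have "u \<longlonglongrightarrow> 0" by (rule Lim_null_comparison[rotated]) (simp add: u(3))
  then have "(\<lambda>n. v + u n) \<longlonglongrightarrow> v + 0" by (intro tendsto_add tendsto_const)
  moreover have "v + u n \<in> W" for n
  proof -
    have "w n - v - u n \<in> N"
      using csubspace_diff[OF N(2) csubspace_diff[OF N(2) _ v(1)] u(1)] w(1) W(1) by blast
    moreover have "A (w n - v - u n) = 0"
      using w(2) v(2) u(2) bounded_clinear_diff[OF A, of "w n - v" "u n"] bounded_clinear_diff[OF A, of "w n" v]
      by simp
    ultimately have "w n - v - u n \<in> W" using ker by blast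
    then have "w n - (w n - v - u n) \<in> W" using csubspace_diff[OF W(3) w(1)] by blast
    then show ?thesis by (simp add: add.commute)
  qed
  ultimately have "v \<in> W" using closed_sequentially[OF W(2)] by (metis add_0_right)
  then show "z \<in> A ` W" using v(2) by blast
qed

section \<open>Kato operators\<close>

definition hyperrange :: "('a::cbanach \<Rightarrow> 'a) \<Rightarrow> 'a set \<Rightarrow> 'a set" where
  "hyperrange A Y = (\<Inter>n. (A ^^ n) ` Y)"

lemma csubspace_hyperrange: "bounded_clinear A \<Longrightarrow> csubspace Y \<Longrightarrow> csubspace (hyperrange A Y)"
  unfolding hyperrange_def by (simp add: csubspace_INT csubspace_image bounded_clinear_funpow)

lemma hyperrange_subset: "hyperrange A Y \<subseteq> Y"
proof -
  have "hyperrange A Y \<subseteq> (A ^^ 0) ` Y" unfolding hyperrange_def by (rule INT_lower) simp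
  then show ?thesis by simp
qed

lemma kato_on_kernel_subset_hyperrange: "kato_on A Y \<Longrightarrow> {x\<in>Y. A x = 0} \<subseteq> hyperrange A Y"
  unfolding kato_on_def hyperrange_def by auto

text \<open>If every kernel vector lies in the hyperrange, A maps the hyperrange onto itself:
  preimages of x chosen in the ranges of higher and higher powers differ by kernel
  vectors, so the first one lies in all these ranges.\<close>

lemma hyperrange_subset_image:
  fixes A :: "'a::cbanach \<Rightarrow> 'a"
  assumes A: "bounded_clinear A" and Y: "csubspace Y" and AY: "A ` Y \<subseteq> Y"
    and ker: "{x\<in>Y. A x = 0} \<subseteq> hyperrange A Y"
  shows "hyperrange A Y \<subseteq> A ` hyperrange A Y"
proof
  fix x assume x: "x \<in> hyperrange A Y"
  have "\<forall>n. \<exists>a. a \<in> Y \<and> x = A ((A ^^ n) a)"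
  proof
    fix n
    have "x \<in> (A ^^ Suc n) ` Y" using x unfolding hyperrange_def by blast
    then show "\<exists>a. a \<in> Y \<and> x = A ((A ^^ n) a)" by auto
  qed
  then obtain a where a: "\<And>n. a n \<in> Y" "\<And>n. x = A ((A ^^ n) (a n))" by metis
  define w where "w n = (A ^^ n) (a n)" for n
  have wR: "w n \<in> (A ^^ n) ` Y" for n using a(1) by (simp add: w_def)
  have wY: "w n \<in> Y" for n using wR funpow_image_subset[OF AY] by blast
  have "w 0 \<in> (A ^^ n) ` Y" for n
  proof -
    have "A (w n) = x" for n using a(2) by (simp add: w_def)
    then have "A (w n - w 0) = 0" using bounded_clinear_diff[OF A, of "w n" "w 0"] by simp
    then have "w n - w 0 \<in> (A ^^ n) ` Y"
      using ker csubspace_diff[OF Y wY wY] unfolding hyperrange_def by blast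
    then have "w n - (w n - w 0) \<in> (A ^^ n) ` Y"
      using csubspace_diff[OF csubspace_image[OF bounded_clinear_funpow[OF A] Y] wR] by blast
    then show ?thesis by simp
  qed
  then have "w 0 \<in> hyperrange A Y" unfolding hyperrange_def by blast
  moreover have "A (w 0) = x" using a(2)[of 0] by (simp add: w_def)
  ultimately show "x \<in> A ` hyperrange A Y" by blast
qed

lemma kato_on_hyperrange_bounded_preimage:
  fixes A :: "'a::cbanach \<Rightarrow> 'a"
  assumes A: "bounded_clinear A" and Y: "closed Y" "csubspace Y" and AY: "A ` Y \<subseteq> Y"
    and K: "kato_on A Y"
  shows "\<exists>C>0. \<forall>x\<in>hyperrange A Y. \<exists>y\<in>hyperrange A Y. A y = x \<and> norm y \<le> C * norm x"
proof -
  obtain C where C: "C > 0" "\<forall>z\<in>A ` Y. \<exists>y\<in>Y. A y = z \<and> norm y \<le> C * norm z"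
    using open_mapping_on[OF A Y] K unfolding kato_on_def by blast
  note ker = kato_on_kernel_subset_hyperrange[OF K]
  have "\<exists>y\<in>hyperrange A Y. A y = x \<and> norm y \<le> C * norm x" if x: "x \<in> hyperrange A Y" for x
  proof -
    obtain w where w: "w \<in> hyperrange A Y" "A w = x"
      using hyperrange_subset_image[OF A Y(2) AY ker] x by blast
    then have "w \<in> Y" using hyperrange_subset by blast
    then obtain y where y: "y \<in> Y" "A y = x" "norm y \<le> C * norm x" using C(2) w(2) by blast
    have "A (y - w) = 0" using y(2) w(2) bounded_clinear_diff[OF A, of y w] by simp
    then have "y - w \<in> hyperrange A Y" using ker csubspace_diff[OF Y(2) y(1) \<open>w \<in> Y\<close>] by blast
    then have "(y - w) + w \<in> hyperrange A Y"
      using csubspace_add[OF csubspace_hyperrange[OF A Y(2)] _ w(1)] by blast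
    then show ?thesis using y by auto
  qed
  then show ?thesis using C(1) by blast
qed

text \<open>The eigenvector is \<Sum> \<mu>^n x_n; it is close to x_0, hence nonzero.\<close>

lemma eigenvector_from_backward_orbit:
  fixes A :: "'a::cbanach \<Rightarrow> 'a"
  assumes A: "bounded_clinear A" and Y: "closed Y" "csubspace Y"
    and xs: "\<And>n. xs n \<in> Y" "\<And>n. A (xs (Suc n)) = xs n" "A (xs 0) = 0" "xs 0 \<noteq> 0"
    and growth: "\<And>n. norm (xs n) \<le> norm (xs 0) * C ^ n" and C: "C > 0"
    and mu: "cmod \<mu> < 1 / (2 * C)"
  shows "\<exists>y\<in>Y. y \<noteq> 0 \<and> A y = \<mu> *\<^sub>C y"
proof -
  define q where "q = cmod \<mu> * C"
  have q: "0 \<le> q" "q < 1/2" using mu C by (auto simp: q_def field_simps)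
  define f where "f n = \<mu> ^ n *\<^sub>C xs n" for n
  have nf: "norm (f n) \<le> norm (xs 0) * q ^ n" for n
  proof -
    have "norm (f n) = cmod \<mu> ^ n * norm (xs n)" by (simp add: f_def norm_scaleC norm_power)
    also have "\<dots> \<le> cmod \<mu> ^ n * (norm (xs 0) * C ^ n)" using growth by (simp add: mult_left_mono)
    also have "\<dots> = norm (xs 0) * q ^ n" by (simp add: q_def power_mult_distrib)
    finally show ?thesis .
  qed
  have sg: "summable (\<lambda>n. norm (xs 0) * q ^ n)" using q by (intro summable_mult summable_geometric) simp
  have sf: "summable f"
    by (rule summable_norm_cancel, rule summable_comparison_test[OF _ sg]) (use nf in auto)
  define y where "y = suminf f"
  have "y \<in> Y"
    unfolding y_def by (rule suminf_in_closed_csubspace[OF Y sf]) (simp add: f_def csubspace_scaleC[OF Y(2) xs(1)])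
  moreover have "A y = \<mu> *\<^sub>C y"
  proof -
    have lin: "bounded_linear A" using bounded_clinear_imp_bounded_linear[OF A] .
    have "A y = (\<Sum>n. A (f (Suc n))) + A (f 0)"
      using bounded_linear.suminf[OF lin sf] suminf_split_head[OF bounded_linear.summable[OF lin sf]]
      by (simp add: y_def)
    also have "(\<lambda>n. A (f (Suc n))) = (\<lambda>n. \<mu> *\<^sub>C f n)"
      by (rule ext) (simp add: f_def bounded_clinear_scaleC[OF A] xs(2) scaleC_scaleC)
    also have "(\<Sum>n. \<mu> *\<^sub>C f n) = \<mu> *\<^sub>C y"
      using bounded_linear.suminf[OF bounded_linear_scaleC_right sf] by (simp add: y_def)
    finally show ?thesis using xs(3) by (simp add: f_def)
  qed
  moreover have "y \<noteq> 0"
  proof -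
    have nfs: "norm (f (Suc n)) \<le> norm (xs 0) * q * q ^ n" for n
      using nf[of "Suc n"] by (simp add: algebra_simps)
    have sqs: "summable (\<lambda>n. norm (xs 0) * q * q ^ n)"
      using q by (intro summable_mult summable_geometric) simp
    have sfs: "summable (\<lambda>n. norm (f (Suc n)))"
      by (rule summable_comparison_test[OF _ sqs]) (use nfs in auto)
    have "y - xs 0 = (\<Sum>n. f (Suc n))" using suminf_split_head[OF sf] by (simp add: y_def f_def)
    then have "norm (y - xs 0) \<le> (\<Sum>n. norm (xs 0) * q * q ^ n)"
      using summable_norm[OF sfs] suminf_le[OF nfs sfs sqs] by simp
    also have "\<dots> = norm (xs 0) * q / (1 - q)"
      using suminf_mult[OF summable_geometric[of q], of "norm (xs 0) * q"] suminf_geometric[of q] q by simp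
    also have "\<dots> < norm (xs 0)"
      using q xs(4) by (simp add: field_simps)
    finally show ?thesis by auto
  qed
  ultimately show ?thesis by blast
qed

lemma kato_on_eigenvectors_near_zero:
  fixes A :: "'a::cbanach \<Rightarrow> 'a"
  assumes A: "bounded_clinear A" and Y: "closed Y" "csubspace Y" and AY: "A ` Y \<subseteq> Y"
    and K: "kato_on A Y" and x0: "x0 \<in> Y" "A x0 = 0" "x0 \<noteq> 0"
  shows "\<exists>r>0. \<forall>\<mu>. cmod \<mu> < r \<longrightarrow> (\<exists>y\<in>Y. y \<noteq> 0 \<and> opshift A \<mu> y = 0)"
proof -
  obtain C where C: "C > 0" and g0: "\<forall>x\<in>hyperrange A Y. \<exists>y\<in>hyperrange A Y. A y = x \<and> norm y \<le> C * norm x"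
    using kato_on_hyperrange_bounded_preimage[OF A Y AY K] by blast
  then obtain g where g: "\<And>x. x \<in> hyperrange A Y \<Longrightarrow> g x \<in> hyperrange A Y \<and> A (g x) = x \<and> norm (g x) \<le> C * norm x"
    by metis
  define xs where "xs n = (g ^^ n) x0" for n
  have "x0 \<in> hyperrange A Y" using kato_on_kernel_subset_hyperrange[OF K] x0 by blast
  then have xsR: "xs n \<in> hyperrange A Y" for n by (induction n) (simp_all add: xs_def g)
  have growth: "norm (xs n) \<le> norm (xs 0) * C ^ n" for n
  proof (induction n)
    case (Suc n)
    have "norm (xs (Suc n)) \<le> C * norm (xs n)" using g[OF xsR[of n]] by (simp add: xs_def)
    also have "\<dots> \<le> C * (norm (xs 0) * C ^ n)" using Suc C by (simp add: mult_left_mono)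
    finally show ?case by (simp add: algebra_simps)
  qed simp
  have "\<exists>y\<in>Y. y \<noteq> 0 \<and> A y = \<mu> *\<^sub>C y" if "cmod \<mu> < 1 / (2 * C)" for \<mu>
  proof (rule eigenvector_from_backward_orbit[OF A Y _ _ _ _ growth C that])
    show "xs n \<in> Y" for n using xsR hyperrange_subset by blast
    show "A (xs (Suc n)) = xs n" for n using g[OF xsR[of n]] by (simp add: xs_def)
  qed (use x0 in \<open>simp_all add: xs_def\<close>)
  then show ?thesis using C by (intro exI[of _ "1 / (2 * C)"]) (simp add: opshift_eq_0_iff)
qed

text \<open>A kernel vector would produce eigenvectors for all small parameters.\<close>

lemma kato_on_bounded_below:
  fixes A :: "'a::cbanach \<Rightarrow> 'a"
  assumes A: "bounded_clinear A" and Y: "closed Y" "csubspace Y" and AY: "A ` Y \<subseteq> Y"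
    and K: "kato_on A Y"
    and inj_near: "\<And>r. r > 0 \<Longrightarrow> \<exists>\<nu>. cmod \<nu> < r \<and> (\<forall>x\<in>Y. opshift A \<nu> x = 0 \<longrightarrow> x = 0)"
  shows "bounded_below_on A Y"
proof (rule bounded_below_onI[OF A Y])
  show "closed (A ` Y)" using K unfolding kato_on_def by blast
  show "\<forall>x\<in>Y. A x = 0 \<longrightarrow> x = 0"
  proof (intro ballI impI, rule ccontr)
    fix x assume "x \<in> Y" "A x = 0" "x \<noteq> 0"
    then obtain r where r: "r > 0" "\<forall>\<mu>. cmod \<mu> < r \<longrightarrow> (\<exists>y\<in>Y. y \<noteq> 0 \<and> opshift A \<mu> y = 0)"
      using kato_on_eigenvectors_near_zero[OF A Y AY K] by blast
    obtain \<nu> where \<nu>: "cmod \<nu> < r" "\<forall>x\<in>Y. opshift A \<nu> x = 0 \<longrightarrow> x = 0"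
      using inj_near[OF r(1)] by blast
    obtain y where "y \<in> Y" "y \<noteq> 0" "opshift A \<nu> y = 0" using r(2) \<nu>(1) by blast
    then show False using \<nu>(2) by blast
  qed
qed

section \<open>Fredholm operators on invariant subspaces\<close>

lemma fredholm_onD:
  assumes "fredholm_on A N"
  shows "\<exists>K. finite K \<and> K \<subseteq> {x\<in>N. A x = 0} \<and> {x\<in>N. A x = 0} \<subseteq> cspan K"
    and "closed (A ` N)"
    and "\<exists>B. finite B \<and> B \<subseteq> N \<and> N \<subseteq> A ` N + cspan B"
  using assms unfolding fredholm_on_def fin_dim_def set_plus_eq_Collect by blast+

text \<open>Induction step: enlarging the closed range of A ^^ n by the finite-dimensional
  kernel keeps it closed, does not change its image under A, and makes it contain the
  kernel.\<close>

lemma fredholm_on_closed_power_range: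
  fixes A :: "'a::cbanach \<Rightarrow> 'a"
  assumes A: "bounded_clinear A" and N: "closed N" "csubspace N" and AN: "A ` N \<subseteq> N"
    and F: "fredholm_on A N"
  shows "closed ((A ^^ n) ` N)"
proof (induction n)
  case 0
  then show ?case using N(1) by simp
next
  case (Suc n)
  define R where "R = (A ^^ n) ` N"
  have R: "closed R" "csubspace R" "R \<subseteq> N"
    using Suc csubspace_image[OF bounded_clinear_funpow[OF A] N(2)] funpow_image_subset[OF AN]
    by (simp_all add: R_def)
  obtain K where K: "finite K" "K \<subseteq> {x\<in>N. A x = 0}" "{x\<in>N. A x = 0} \<subseteq> cspan K"
    using fredholm_onD(1)[OF F] by blast
  have spK: "cspan K \<subseteq> {x\<in>N. A x = 0}" by (rule cspan_minimal[OF K(2) csubspace_kernel[OF A N(2)]])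
  define W where "W = R + cspan K"
  have W: "closed W" "csubspace W"
    unfolding W_def using closed_set_plus_cspan[OF R(1,2) K(1)] csubspace_set_plus[OF R(2) csubspace_cspan]
    by simp_all
  have RW: "r \<in> W" if "r \<in> R" for r
    using set_plus_intro[OF that csubspace_0[OF csubspace_cspan]] by (simp add: W_def)
  have "W \<subseteq> N"
  proof
    fix w assume "w \<in> W"
    then obtain r s where "r \<in> R" "s \<in> cspan K" "w = r + s" unfolding W_def set_plus_def by blast
    then show "w \<in> N" using R(3) spK csubspace_add[OF N(2)] by blast
  qed
  moreover have "{x\<in>N. A x = 0} \<subseteq> W"
  proof
    fix x assume "x \<in> {x\<in>N. A x = 0}"
    then have "0 + x \<in> W" using K(3) set_plus_intro[OF csubspace_0[OF R(2)]] by (auto simp: W_def)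
    then show "x \<in> W" by simp
  qed
  ultimately have "closed (A ` W)"
    using closed_image_subspace_containing_kernel[OF A N fredholm_onD(2)[OF F] _ W(1,2)] by blast
  moreover have "A ` W = A ` R"
  proof
    show "A ` W \<subseteq> A ` R"
    proof
      fix y assume "y \<in> A ` W"
      then obtain r s where rs: "y = A (r + s)" "r \<in> R" "s \<in> cspan K"
        unfolding W_def set_plus_def by blast
      then have "A s = 0" using spK by blast
      then show "y \<in> A ` R" using rs bounded_clinear_add[OF A, of r s] by simp
    qed
    show "A ` R \<subseteq> A ` W" using RW by blast
  qed
  ultimately show ?case by (simp add: R_def image_comp)
qed

lemma fredholm_on_power_range_finite_codim:
  fixes A :: "'a::cbanach \<Rightarrow> 'a"
  assumes A: "bounded_clinear A" and AN: "A ` N \<subseteq> N" and F: "fredholm_on A N"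
  shows "\<exists>B. finite B \<and> B \<subseteq> N \<and> N \<subseteq> (A ^^ n) ` N + cspan B"
proof (induction n)
  case 0
  have "N \<subseteq> N + cspan {}" using set_plus_intro[OF _ csubspace_0[OF csubspace_cspan]] by force
  then show ?case by auto
next
  case (Suc n)
  then obtain B where B: "finite B" "B \<subseteq> N" "N \<subseteq> (A ^^ n) ` N + cspan B" by blast
  obtain B0 where B0: "finite B0" "B0 \<subseteq> N" "N \<subseteq> A ` N + cspan B0"
    using fredholm_onD(3)[OF F] by blast
  define B' where "B' = A ` B \<union> B0"
  have "N \<subseteq> (A ^^ Suc n) ` N + cspan B'"
  proof
    fix x assume "x \<in> N"
    then obtain y s0 where ys0: "y \<in> N" "s0 \<in> cspan B0" "x = A y + s0"
      using B0(3) unfolding set_plus_def by blast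
    then obtain r s where rs: "r \<in> (A ^^ n) ` N" "s \<in> cspan B" "y = r + s"
      using B(3) unfolding set_plus_def by blast
    have "A s \<in> cspan B'" using rs(2) cspan_image[OF A, of B] cspan_mono[of "A ` B" B'] by (auto simp: B'_def)
    moreover have "s0 \<in> cspan B'" using ys0(2) cspan_mono[of B0 B'] by (auto simp: B'_def)
    ultimately have "A s + s0 \<in> cspan B'" by (rule csubspace_add[OF csubspace_cspan])
    moreover have "A r \<in> (A ^^ Suc n) ` N" using rs(1) by (auto simp: image_comp)
    moreover have "x = A r + (A s + s0)" using ys0(3) rs(3) bounded_clinear_add[OF A, of r s] by (simp add: add.assoc)
    ultimately show "x \<in> (A ^^ Suc n) ` N + cspan B'" using set_plus_intro by blast
  qed
  moreover have "finite B'" "B' \<subseteq> N" using B B0 AN by (auto simp: B'_def image_subset_iff)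
  ultimately show ?case by blast
qed

text \<open>A K n of least dimension is contained in every later K n: otherwise a basis of
  the later one extended by a vector of K n would be an independent set in K n larger
  than its dimension.\<close>

lemma decreasing_csubspaces_stabilize:
  fixes K :: "nat \<Rightarrow> 'a::cbanach set"
  assumes cs: "\<And>n. csubspace (K n)" and dec: "\<And>m n. m \<le> n \<Longrightarrow> K n \<subseteq> K m"
    and fin: "finite B" and sp: "\<And>n. K n \<subseteq> cspan B"
  shows "\<exists>n0. \<forall>n\<ge>n0. K n = K n0"
proof -
  obtain n0 where n0: "\<forall>m. cvs.dim (K n0) \<le> cvs.dim (K m)"
    using ex_has_least_nat[of "\<lambda>_. True" 0 "\<lambda>n. cvs.dim (K n)"] by blast
  have basis: "\<exists>V. V \<subseteq> K m \<and> cvs.independent V \<and> K m \<subseteq> cvs.span V \<and> card V = cvs.dim (K m) \<and> finite V"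
    for m
  proof -
    obtain V where V: "V \<subseteq> K m" "cvs.independent V" "K m \<subseteq> cvs.span V" "card V = cvs.dim (K m)"
      using cvs.basis_exists by blast
    have "V \<subseteq> cvs.span B" using V(1) sp[of m] by (auto simp: cspan_eq_span)
    then have "finite V" using cvs.independent_span_bound[OF fin V(2)] by blast
    then show ?thesis using V by blast
  qed
  have "K n0 \<subseteq> K n" if "n \<ge> n0" for n
  proof (rule ccontr)
    assume "\<not> K n0 \<subseteq> K n"
    then obtain v where v: "v \<in> K n0" "v \<notin> K n" by blast
    obtain V where V: "V \<subseteq> K n" "cvs.independent V" "card V = cvs.dim (K n)" "finite V"
      using basis by blast
    have "cvs.span V \<subseteq> K n" using cvs.span_minimal[OF V(1)] cs[of n] by (simp add: csubspace_eq_subspace)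
    then have "cvs.independent (insert v V)" using cvs.independent_insertI[OF _ V(2)] v(2) by blast
    moreover obtain V' where V': "K n0 \<subseteq> cvs.span V'" "card V' = cvs.dim (K n0)" "finite V'"
      using basis by blast
    moreover have "insert v V \<subseteq> cvs.span V'" using V'(1) v(1) V(1) dec[OF that] by blast
    ultimately have "card (insert v V) \<le> card V'" using cvs.independent_span_bound by blast
    moreover have "v \<notin> V" using v(2) V(1) by blast
    then have "card (insert v V) = card V + 1" using V(4) by simp
    ultimately show False using V(3) V'(2) n0[rule_format, of n] by simp
  qed
  then show ?thesis using dec by blast
qed

lemma bounded_clinear_image_set_plus:
  assumes "bounded_clinear S"
  shows "S ` (M + U) = S ` M + S ` U"
proof
  show "S ` (M + U) \<subseteq> S ` M + S ` U"
  proof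
    fix y assume "y \<in> S ` (M + U)"
    then obtain a b where "a \<in> M" "b \<in> U" "y = S (a + b)" by (auto simp: set_plus_def)
    then show "y \<in> S ` M + S ` U" using bounded_clinear_add[OF assms, of a b] by (simp add: set_plus_intro)
  qed
  show "S ` M + S ` U \<subseteq> S ` (M + U)"
  proof
    fix y assume "y \<in> S ` M + S ` U"
    then obtain a b where "a \<in> M" "b \<in> U" "y = S a + S b" by (auto simp: set_plus_def)
    then show "y \<in> S ` (M + U)" using bounded_clinear_add[OF assms, of a b] by (metis imageI set_plus_intro)
  qed
qed

text \<open>For a Fredholm operator the ranges of A ^^ n decrease, and so do their
  intersections with the finite-dimensional kernel; once the latter are stable, the
  restriction of A to the range Y of A ^^ n0 is a Kato operator, and Y has finite
  codimension and contains all eigenvectors for nonzero eigenvalues.\<close>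

lemma fredholm_on_kato_core:
  fixes A :: "'a::cbanach \<Rightarrow> 'a"
  assumes A: "bounded_clinear A" and N: "closed N" "csubspace N" and AN: "A ` N \<subseteq> N"
    and F: "fredholm_on A N"
  shows "\<exists>Y B. closed Y \<and> csubspace Y \<and> Y \<subseteq> N \<and> A ` Y \<subseteq> Y \<and> kato_on A Y
    \<and> finite B \<and> B \<subseteq> N \<and> N \<subseteq> Y + cspan B
    \<and> (\<forall>\<nu> x. \<nu> \<noteq> 0 \<longrightarrow> x \<in> N \<longrightarrow> opshift A \<nu> x = 0 \<longrightarrow> x \<in> Y)"
proof -
  define R where "R n = (A ^^ n) ` N" for n
  have Rcs: "csubspace (R n)" for n unfolding R_def by (rule csubspace_image[OF bounded_clinear_funpow[OF A] N(2)])
  have Rdec: "R n \<subseteq> R m" if "m \<le> n" for m n unfolding R_def by (rule funpow_image_antimono[OF AN that])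
  have Radd: "R (k + n) = (A ^^ k) ` R n" for k n by (simp add: R_def funpow_add image_comp)
  define ker where "ker = {x\<in>N. A x = 0}"
  obtain Bk where Bk: "finite Bk" "ker \<subseteq> cspan Bk" using fredholm_onD(1)[OF F] unfolding ker_def by blast
  have "\<exists>n0. \<forall>n\<ge>n0. ker \<inter> R n = ker \<inter> R n0"
  proof (rule decreasing_csubspaces_stabilize[OF _ _ Bk(1)])
    show "csubspace (ker \<inter> R n)" for n
      unfolding ker_def by (rule csubspace_Int[OF csubspace_kernel[OF A N(2)] Rcs])
  qed (use Rdec Bk(2) in auto)
  then obtain n0 where n0: "\<And>n. n \<ge> n0 \<Longrightarrow> ker \<inter> R n = ker \<inter> R n0" by blast
  define Y where "Y = R n0"
  have Y: "closed Y" "csubspace Y" "Y \<subseteq> N"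
    using fredholm_on_closed_power_range[OF A N AN F] Rcs Rdec[of 0 n0] by (simp_all add: Y_def R_def)
  have AY: "A ` Y = R (Suc n0)" using Radd[of 1 n0] by (simp add: Y_def)
  have "kato_on A Y"
    unfolding kato_on_def
  proof
    have "closed (R (Suc n0))" unfolding R_def by (rule fredholm_on_closed_power_range[OF A N AN F])
    then show "closed (A ` Y)" using AY by simp
    show "\<forall>k. {x\<in>Y. A x = 0} \<subseteq> (A ^^ k) ` Y"
    proof (intro allI subsetI)
      fix k x assume "x \<in> {x\<in>Y. A x = 0}"
      then have "x \<in> ker \<inter> R n0" using Y(3) by (auto simp: ker_def Y_def)
      moreover have "ker \<inter> R (k + n0) = ker \<inter> R n0" by (rule n0) simp
      ultimately have "x \<in> R (k + n0)" by blast
      then show "x \<in> (A ^^ k) ` Y" using Radd by (simp add: Y_def)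
    qed
  qed
  moreover have "x \<in> Y" if "\<nu> \<noteq> 0" "x \<in> N" "opshift A \<nu> x = 0" for \<nu> x
  proof -
    have pw: "(A ^^ n0) x = \<nu> ^ n0 *\<^sub>C x" using funpow_eigenvector[OF A] that(3) by (simp add: opshift_eq_0_iff)
    have "(A ^^ n0) ((1/\<nu>) ^ n0 *\<^sub>C x) = x"
      using bounded_clinear_scaleC[OF bounded_clinear_funpow[OF A]] pw that(1)
      by (simp add: scaleC_scaleC power_mult_distrib[symmetric] scaleC_one)
    then show ?thesis using csubspace_scaleC[OF N(2) that(2)] unfolding Y_def R_def by (metis imageI)
  qed
  moreover obtain B where "finite B" "B \<subseteq> N" "N \<subseteq> Y + cspan B"
    using fredholm_on_power_range_finite_codim[OF A AN F] unfolding Y_def R_def by blast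
  moreover have "A ` Y \<subseteq> Y" using AY Rdec[of n0 "Suc n0"] by (simp add: Y_def)
  ultimately show ?thesis using Y by blast
qed

lemma fredholm_on_bounded_below_punctured:
  fixes A :: "'a::cbanach \<Rightarrow> 'a"
  assumes A: "bounded_clinear A" and N: "closed N" "csubspace N" and AN: "A ` N \<subseteq> N"
    and F: "fredholm_on A N"
    and inj_near: "\<And>r. r > 0 \<Longrightarrow> \<exists>\<nu>. cmod \<nu> < r \<and> (\<forall>x\<in>N. opshift A \<nu> x = 0 \<longrightarrow> x = 0)"
  shows "\<exists>c>0. \<forall>\<nu>. \<nu> \<noteq> 0 \<longrightarrow> cmod \<nu> < c \<longrightarrow> bounded_below_on (opshift A \<nu>) N"
proof -
  obtain Y B where Y: "closed Y" "csubspace Y" "Y \<subseteq> N" "A ` Y \<subseteq> Y" "kato_on A Y"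
    and B: "finite B" "B \<subseteq> N" "N \<subseteq> Y + cspan B"
    and eig: "\<And>\<nu> x. \<nu> \<noteq> 0 \<Longrightarrow> x \<in> N \<Longrightarrow> opshift A \<nu> x = 0 \<Longrightarrow> x \<in> Y"
    using fredholm_on_kato_core[OF A N AN F] by blast
  have "bounded_below_on A Y"
  proof (rule kato_on_bounded_below[OF A Y(1,2,4,5)])
    fix r :: real assume "r > 0"
    then show "\<exists>\<nu>. cmod \<nu> < r \<and> (\<forall>x\<in>Y. opshift A \<nu> x = 0 \<longrightarrow> x = 0)" using inj_near Y(3) by blast
  qed
  then obtain c where c: "c > 0" "\<forall>x\<in>Y. c * norm x \<le> norm (A x)"
    unfolding bounded_below_on_def by blast
  have "bounded_below_on (opshift A \<nu>) N" if \<nu>: "\<nu> \<noteq> 0" "cmod \<nu> < c" for \<nu>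
  proof -
    define S where "S = opshift A \<nu>"
    have S: "bounded_clinear S" unfolding S_def by (rule bounded_clinear_opshift[OF A])
    have bbY: "\<forall>x\<in>Y. (c - cmod \<nu>) * norm x \<le> norm (S x)"
      unfolding S_def by (rule bounded_below_on_opshift[OF c(2)])
    have "c - cmod \<nu> > 0" using \<nu>(2) by simp
    then have bbY: "bounded_below_on S Y" using bbY unfolding bounded_below_on_def by blast
    have inj: "\<forall>x\<in>N. S x = 0 \<longrightarrow> x = 0"
    proof (intro ballI impI)
      fix x assume "x \<in> N" "S x = 0"
      then have "x \<in> Y" using eig[OF \<nu>(1)] by (simp add: S_def)
      then show "x = 0" using bounded_below_on_kernel[OF bbY] \<open>S x = 0\<close> by blast
    qed
    have "cspan B \<subseteq> N" by (rule cspan_minimal[OF B(2) N(2)])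
    then have "Y + cspan B \<subseteq> N" using Y(3) csubspace_add[OF N(2)] by (auto simp: set_plus_def)
    then have "S ` N = S ` Y + cspan (S ` B)"
      using B(3) bounded_clinear_image_set_plus[OF S] cspan_image[OF S] by (metis subset_antisym)
    moreover have "closed (S ` Y)" by (rule bounded_below_on_closed_image[OF S Y(1,2) bbY])
    ultimately have "closed (S ` N)"
      using closed_set_plus_cspan[OF _ csubspace_image[OF S Y(2)]] B(1) by simp
    then show ?thesis using bounded_below_onI[OF S N _ inj] by (simp add: S_def)
  qed
  then show ?thesis using c(1) by blast
qed

lemma fredholm_on_invertible_punctured:
  fixes A :: "'a::cbanach \<Rightarrow> 'a"
  assumes A: "bounded_clinear A" and N: "closed N" "csubspace N" and AN: "A ` N \<subseteq> N"
    and F: "fredholm_on A N"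
    and res: "\<And>r. r > 0 \<Longrightarrow> \<exists>\<nu>. cmod \<nu> < r \<and> invertible_on (opshift A \<nu>) N"
  shows "\<exists>c>0. \<forall>\<nu>. \<nu> \<noteq> 0 \<longrightarrow> cmod \<nu> < c \<longrightarrow> invertible_on (opshift A \<nu>) N"
proof -
  have iff: "invertible_on (opshift A \<nu>) N \<longleftrightarrow> (\<forall>x\<in>N. opshift A \<nu> x = 0 \<longrightarrow> x = 0) \<and> N \<subseteq> opshift A \<nu> ` N"
    for \<nu> by (rule invertible_on_iff[OF bounded_clinear_opshift[OF A] N image_opshift_subset[OF N(2) AN]])
  have "\<exists>\<nu>. cmod \<nu> < r \<and> (\<forall>x\<in>N. opshift A \<nu> x = 0 \<longrightarrow> x = 0)" if "r > 0" for r
    using res[OF that] iff by blast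
  then obtain c where c: "c > 0" and bb: "\<And>\<nu>. \<nu> \<noteq> 0 \<Longrightarrow> cmod \<nu> < c \<Longrightarrow> bounded_below_on (opshift A \<nu>) N"
    using fredholm_on_bounded_below_punctured[OF A N AN F] by blast
  define D where "D = ball (0::complex) c - {0}"
  have "connected D"
    unfolding D_def using aff_dim_open[of "ball (0::complex) c"] c by (intro connected_punctured_convex) auto
  moreover have bbD: "bounded_below_on (opshift A \<nu>) N" if "\<nu> \<in> D" for \<nu>
    using bb that by (simp add: D_def)
  moreover obtain \<nu>1 where "\<nu>1 \<in> D" "N \<subseteq> opshift A \<nu>1 ` N"
  proof -
    obtain \<nu> where \<nu>: "cmod \<nu> < c" "invertible_on (opshift A \<nu>) N" using res c by blast
    show ?thesis
    proof (cases "\<nu> = 0")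
      case False
      then show ?thesis using that \<nu> iff by (simp add: D_def)
    next
      case True
      then have "bounded_below_on A N"
        using invertible_on_imp_bounded_below_on[OF A N AN] \<nu>(2) by (simp add: opshift_0)
      then obtain b where b: "b > 0" "\<forall>x\<in>N. b * norm x \<le> norm (A x)" unfolding bounded_below_on_def by blast
      define \<delta> where "\<delta> = complex_of_real (min b c / 2)"
      have \<delta>: "cmod \<delta> = min b c / 2" using b(1) c by (simp add: \<delta>_def)
      have "N \<subseteq> opshift A \<delta> ` N"
        using surj_on_opshift_small[OF A N AN b(2)] iff[of 0] \<nu>(2) True \<delta> b(1) by (simp add: opshift_0)
      moreover have "\<delta> \<in> D" using \<delta> b(1) c by (auto simp: D_def)
      ultimately show ?thesis using that by blast
    qed
  qed
  ultimately have "\<forall>\<nu>\<in>D. invertible_on (opshift A \<nu>) N"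
    by (rule invertible_on_opshift_connected[OF A N AN])
  then show ?thesis using c by (auto simp: D_def)
qed

section \<open>The elementary inclusions between the spectra\<close>

lemma fin_dim_zero: "fin_dim {0::'a::cbanach}"
  unfolding fin_dim_def by (intro exI[of _ "{}"]) (simp add: cspan_eq_span)

lemma invertible_on_zero: "bounded_clinear A \<Longrightarrow> invertible_on A {0}"
  unfolding invertible_on_def by (intro exI[of _ id]) (simp add: bounded_clinear_0)

lemma reducing_pair_UNIV_zero: "bounded_clinear S \<Longrightarrow> reducing_pair S UNIV {0}"
  unfolding reducing_pair_def using csubspace_UNIV csubspace_zero bounded_clinear_0 by auto

text \<open>For nilpotent S, the finite Neumann series - \<Sum>k<n. S^k y / z^(k+1) solves
  (S - z) x = y.\<close>

lemma nilpotent_on_opshift_surj: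
  fixes S :: "'a::cbanach \<Rightarrow> 'a"
  assumes S: "bounded_clinear S" and N: "csubspace N" and SN: "S ` N \<subseteq> N"
    and nil: "\<forall>x\<in>N. (S ^^ n) x = 0" and z: "z \<noteq> 0"
  shows "N \<subseteq> opshift S z ` N"
proof
  fix y assume y: "y \<in> N"
  define u where "u k = (1/z) ^ k *\<^sub>C (S ^^ k) y" for k
  have uN: "u k \<in> N" for k
    using csubspace_scaleC[OF N] funpow_image_subset[OF SN, of k] y by (auto simp: u_def)
  have Su: "S ((1/z) *\<^sub>C u k) = u (Suc k)" for k
    by (simp add: u_def bounded_clinear_scaleC[OF S] scaleC_scaleC mult.commute)
  have zu: "z *\<^sub>C ((1/z) *\<^sub>C u k) = u k" for k using z by (simp add: scaleC_scaleC scaleC_one)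
  define x where "x = - (\<Sum>k<n. (1/z) *\<^sub>C u k)"
  have "x \<in> N" unfolding x_def
    by (intro csubspace_minus[OF N] csubspace_sum[OF N] csubspace_scaleC[OF N] uN)
  moreover have "opshift S z x = y"
  proof -
    have "S x = - (\<Sum>k<n. u (Suc k))"
      by (simp add: x_def bounded_clinear_minus[OF S] bounded_clinear_sum[OF S] Su)
    moreover have "z *\<^sub>C x = - (\<Sum>k<n. u k)"
      using z by (simp add: x_def bounded_clinear_minus[OF bounded_clinear_scaleC_right]
          bounded_clinear_sum[OF bounded_clinear_scaleC_right] zu)
    ultimately have "opshift S z x = u 0 - u n"
      using sum_lessThan_telescope'[of u n] by (simp add: opshift_def sum_subtractf)
    moreover have "u n = 0" using nil y by (simp add: u_def cvs.scale_zero_right)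
    ultimately show ?thesis by (simp add: u_def scaleC_one)
  qed
  ultimately show "y \<in> opshift S z ` N" by blast
qed

lemma nilpotent_on_imp_quasinilpotent_on:
  fixes S :: "'a::cbanach \<Rightarrow> 'a"
  assumes S: "bounded_clinear S" and N: "closed N" "csubspace N" and SN: "S ` N \<subseteq> N"
    and nil: "nilpotent_on S N"
  shows "quasinilpotent_on S N"
  unfolding quasinilpotent_on_def spectrum_on_def
proof (intro subsetI, rule ccontr)
  fix z assume "z \<in> {z. \<not> invertible_on (opshift S z) N}" "z \<notin> {0}"
  then have z: "z \<noteq> 0" "\<not> invertible_on (opshift S z) N" by auto
  obtain n where n: "\<forall>x\<in>N. (S ^^ n) x = 0" using nil unfolding nilpotent_on_def by blast
  have "x = 0" if "x \<in> N" "opshift S z x = 0" for x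
  proof -
    have "(S ^^ n) x = z ^ n *\<^sub>C x" using funpow_eigenvector[OF S] that(2) by (simp add: opshift_eq_0_iff)
    then have "z ^ n *\<^sub>C x = 0" using n that(1) by simp
    then show ?thesis using z(1) by (simp add: cvs.scale_eq_0_iff)
  qed
  then show False
    using z(2) nilpotent_on_opshift_surj[OF S N(2) SN n z(1)]
      invertible_on_iff[OF bounded_clinear_opshift[OF S] N image_opshift_subset[OF N(2) SN]]
    by blast
qed

lemma invertible_on_imp_fredholm_on:
  fixes A :: "'a::cbanach \<Rightarrow> 'a"
  assumes A: "bounded_clinear A" and N: "closed N" "csubspace N" and AN: "A ` N \<subseteq> N"
    and inv: "invertible_on A N"
  shows "fredholm_on A N"
proof -
  have inj: "\<forall>x\<in>N. A x = 0 \<longrightarrow> x = 0" and surj: "N \<subseteq> A ` N"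
    using inv by (simp_all add: invertible_on_iff[OF A N AN])
  have "{x\<in>N. A x = 0} = {0}" using inj csubspace_0[OF N(2)] bounded_clinear_0[OF A] by auto
  moreover have "A ` N = N" using AN surj by (rule subset_antisym)
  moreover have "N \<subseteq> {r + y |r y. r \<in> N \<and> y \<in> cspan {}}"
    by (auto simp: cspan_eq_span intro: exI[of _ 0])
  ultimately show ?thesis unfolding fredholm_on_def using fin_dim_zero N(1) by auto
qed

lemma quasinilpotent_on_imp_riesz_on:
  fixes S :: "'a::cbanach \<Rightarrow> 'a"
  assumes S: "bounded_clinear S" and N: "closed N" "csubspace N" and SN: "S ` N \<subseteq> N"
    and q: "quasinilpotent_on S N"
  shows "riesz_on S N"
  unfolding riesz_on_def
proof (intro allI impI)
  fix z :: complex assume "z \<noteq> 0"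
  then have "invertible_on (opshift S z) N" using q unfolding quasinilpotent_on_def spectrum_on_def by auto
  then show "fredholm_on (opshift S z) N"
    by (rule invertible_on_imp_fredholm_on[OF bounded_clinear_opshift[OF S] N image_opshift_subset[OF N(2) SN]])
qed

lemma bounded_below_on_imp_kato_on:
  fixes S :: "'a::cbanach \<Rightarrow> 'a"
  assumes S: "bounded_clinear S" and M: "closed M" "csubspace M" and bb: "bounded_below_on S M"
  shows "kato_on S M"
proof -
  have "{x\<in>M. S x = 0} \<subseteq> (S ^^ n) ` M" for n
  proof
    fix x assume "x \<in> {x\<in>M. S x = 0}"
    then have "x = 0" using bounded_below_on_kernel[OF bb] by blast
    then show "x \<in> (S ^^ n) ` M"
      using csubspace_0[OF M(2)] bounded_clinear_0[OF bounded_clinear_funpow[OF S]] by (metis imageI)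
  qed
  then show ?thesis unfolding kato_on_def using bounded_below_on_closed_image[OF S M bb] by blast
qed

lemma spectra_inclusions:
  fixes T :: "'a::cbanach \<Rightarrow> 'a"
  assumes T: "bounded_clinear T"
  shows "sigma_ec T \<subseteq> sigma_ap T" "sigma_gKR T \<subseteq> sigma_gK T" "sigma_gK T \<subseteq> sigma_Kt T"
    "sigma_Kt T \<subseteq> sigma_eK T" "sigma_eK T \<subseteq> sigma_K T" "sigma_K T \<subseteq> sigma_ap T"
    "sigma_gKR T \<subseteq> sigma_gDRM T" "sigma_gDRM T \<subseteq> sigma_ap T"
proof -
  have S: "bounded_clinear (opshift T z)" for z by (rule bounded_clinear_opshift[OF T])
  have rp: "closed M \<and> csubspace M \<and> S ` M \<subseteq> M \<and> closed N \<and> csubspace N \<and> S ` N \<subseteq> N"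
    if "reducing_pair S M N" for S :: "'a \<Rightarrow> 'a" and M N
    using that unfolding reducing_pair_def by blast
  note bb_kato = bounded_below_on_imp_kato_on[OF S closed_UNIV csubspace_UNIV]
  show "sigma_ec T \<subseteq> sigma_ap T"
    unfolding sigma_ec_def sigma_ap_def
    using bounded_below_on_closed_image[OF S closed_UNIV csubspace_UNIV] by blast
  show "sigma_gKR T \<subseteq> sigma_gK T"
    unfolding sigma_gKR_def sigma_gK_def has_GKRD_def has_GKD_def
    using quasinilpotent_on_imp_riesz_on[OF S] rp by blast
  show "sigma_gK T \<subseteq> sigma_Kt T"
    unfolding sigma_gK_def sigma_Kt_def has_GKD_def kato_type_def
    using nilpotent_on_imp_quasinilpotent_on[OF S] rp by blast
  show "sigma_Kt T \<subseteq> sigma_eK T"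
    unfolding sigma_Kt_def sigma_eK_def kato_type_def essentially_kato_def by blast
  have "nilpotent_on S {0}" for S :: "'a \<Rightarrow> 'a" unfolding nilpotent_on_def by (intro exI[of _ 0]) simp
  then show "sigma_eK T \<subseteq> sigma_K T"
    unfolding sigma_eK_def sigma_K_def essentially_kato_def kato_def
    using reducing_pair_UNIV_zero[OF S] fin_dim_zero by blast
  show "sigma_K T \<subseteq> sigma_ap T"
    unfolding sigma_K_def sigma_ap_def kato_def using bb_kato by blast
  show "sigma_gKR T \<subseteq> sigma_gDRM T"
    unfolding sigma_gKR_def sigma_gDRM_def has_GKRD_def has_gDR_M_def
    using bounded_below_on_imp_kato_on[OF S] rp by blast
  have "riesz_on (opshift T z) {0}" for z
    using quasinilpotent_on_imp_riesz_on[OF S closed_singleton csubspace_zero]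
      invertible_on_zero[OF bounded_clinear_opshift[OF S]] bounded_clinear_0[OF S]
    by (simp add: quasinilpotent_on_def spectrum_on_def)
  then show "sigma_gDRM T \<subseteq> sigma_ap T"
    unfolding sigma_gDRM_def sigma_ap_def has_gDR_M_def using reducing_pair_UNIV_zero[OF S] by blast
qed

section \<open>Generalized Kato-Riesz decompositions at boundary points of the spectrum\<close>

lemma spectrum_opshift_iff: "z \<in> spectrum T \<longleftrightarrow> \<not> invertible_on (opshift T z) UNIV"
  by (simp add: spectrum_def spectrum_on_def)

lemma sigma_ap_subset_spectrum:
  fixes T :: "'a::cbanach \<Rightarrow> 'a"
  assumes "bounded_clinear T"
  shows "sigma_ap T \<subseteq> spectrum T"
  using invertible_on_imp_bounded_below_on[OF bounded_clinear_opshift[OF assms] closed_UNIV csubspace_UNIV]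
  by (auto simp: sigma_ap_def spectrum_opshift_iff)

lemma frontier_spectrum_resolvent_near:
  assumes "z \<in> frontier (spectrum T)" "r > 0"
  shows "\<exists>\<nu>. cmod \<nu> < r \<and> invertible_on (opshift (opshift T z) \<nu>) UNIV"
proof -
  have "z \<notin> interior (spectrum T)" using assms(1) by (simp add: frontier_def)
  then have "\<not> ball z r \<subseteq> spectrum T" using assms(2) mem_interior by blast
  then obtain w where "w \<in> ball z r" "w \<notin> spectrum T" by blast
  then show ?thesis
    by (intro exI[of _ "w - z"]) (simp add: spectrum_opshift_iff opshift_opshift dist_norm norm_minus_commute)
qed

lemma frontier_in_punctured_ball:
  fixes S :: "complex set"
  assumes "l \<in> S" "l islimpt S" "w \<in> ball l c" "w \<notin> S"
  shows "\<exists>w'\<in>ball l c - {l}. w' \<in> frontier S"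
proof -
  have "c > 0" using assms(3) zero_le_dist[of l w] unfolding mem_ball by linarith
  have conn: "connected (ball l c - {l})"
    using aff_dim_open[of "ball l c"] \<open>c > 0\<close> by (intro connected_punctured_convex) auto
  obtain x where "x \<in> S" "x \<noteq> l" "dist x l < c" using assms(2) \<open>c > 0\<close> unfolding islimpt_approachable by blast
  then have "(ball l c - {l}) \<inter> S \<noteq> {}" by (auto simp: dist_commute)
  moreover have "(ball l c - {l}) - S \<noteq> {}" using assms by auto
  ultimately show ?thesis using connected_Int_frontier[OF conn] by blast
qed

text \<open>Resolvent points near 0 make S injective on M, hence bounded below there, and
  the invertibility of S - \<nu> on M then spreads over a whole disc.\<close>

lemma kato_part_invertible_near_zero:
  fixes S :: "'a::cbanach \<Rightarrow> 'a"
  assumes S: "bounded_clinear S" and MN: "reducing_pair S M N" and K: "kato_on S M"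
    and res: "\<And>r. r > 0 \<Longrightarrow> \<exists>\<nu>. cmod \<nu> < r \<and> invertible_on (opshift S \<nu>) UNIV"
  shows "\<exists>c>0. \<forall>\<nu>. cmod \<nu> < c \<longrightarrow> invertible_on (opshift S \<nu>) M"
proof -
  have M: "closed M" "csubspace M" "S ` M \<subseteq> M" using MN unfolding reducing_pair_def by blast+
  have invM: "invertible_on (opshift S \<nu>) M" if "invertible_on (opshift S \<nu>) UNIV" for \<nu>
    using reducing_pair_invertible_iff[OF bounded_clinear_opshift[OF S] reducing_pair_opshift[OF MN]] that by blast
  note iffM = invertible_on_iff[OF bounded_clinear_opshift[OF S] M(1,2) image_opshift_subset[OF M(2,3)]]
  have "bounded_below_on S M"
  proof (rule kato_on_bounded_below[OF S M K])
    fix r :: real assume "r > 0"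
    then show "\<exists>\<nu>. cmod \<nu> < r \<and> (\<forall>x\<in>M. opshift S \<nu> x = 0 \<longrightarrow> x = 0)" using res invM iffM by meson
  qed
  then obtain c where c: "c > 0" "\<forall>x\<in>M. c * norm x \<le> norm (S x)" unfolding bounded_below_on_def by blast
  obtain \<nu>0 where \<nu>0: "cmod \<nu>0 < c" "invertible_on (opshift S \<nu>0) UNIV" using res c(1) by blast
  have "\<forall>\<nu>\<in>ball 0 c. invertible_on (opshift S \<nu>) M"
  proof (rule invertible_on_opshift_connected[OF S M])
    show "connected (ball (0::complex) c)" by simp
    show "bounded_below_on (opshift S \<nu>) M" if "\<nu> \<in> ball 0 c" for \<nu>
      using bounded_below_on_opshift[OF c(2), of \<nu>] that unfolding bounded_below_on_def
      by (intro exI[of _ "c - cmod \<nu>"]) auto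
    show "\<nu>0 \<in> ball 0 c" "M \<subseteq> opshift S \<nu>0 ` M" using \<nu>0 invM iffM by auto
  qed
  then show ?thesis using c(1) by auto
qed

lemma riesz_part_invertible_punctured:
  fixes S :: "'a::cbanach \<Rightarrow> 'a"
  assumes S: "bounded_clinear S" and MN: "reducing_pair S M N" and F: "fredholm_on S N"
    and res: "\<And>r. r > 0 \<Longrightarrow> \<exists>\<nu>. cmod \<nu> < r \<and> invertible_on (opshift S \<nu>) UNIV"
  shows "\<exists>c>0. \<forall>\<nu>. \<nu> \<noteq> 0 \<longrightarrow> cmod \<nu> < c \<longrightarrow> invertible_on (opshift S \<nu>) N"
proof (rule fredholm_on_invertible_punctured[OF S _ _ _ F])
  show "closed N" "csubspace N" "S ` N \<subseteq> N" using MN unfolding reducing_pair_def by blast+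
  fix r :: real assume "r > 0"
  then show "\<exists>\<nu>. cmod \<nu> < r \<and> invertible_on (opshift S \<nu>) N"
    using res reducing_pair_invertible_iff[OF bounded_clinear_opshift[OF S] reducing_pair_opshift[OF MN]] by meson
qed

lemma sigma_ap_subset_sigma_gKR:
  fixes T :: "'a::cbanach \<Rightarrow> 'a"
  assumes T: "bounded_clinear T"
    and ap_frontier: "sigma_ap T = frontier (spectrum T)"
    and no_isolated: "\<forall>z\<in>frontier (spectrum T). z islimpt spectrum T"
  shows "sigma_ap T \<subseteq> sigma_gKR T"
proof
  fix l assume l: "l \<in> sigma_ap T"
  show "l \<in> sigma_gKR T"
  proof (rule ccontr)
    assume "l \<notin> sigma_gKR T"
    then obtain M N where MN: "reducing_pair (opshift T l) M N" and K: "kato_on (opshift T l) M"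
      and R: "riesz_on (opshift T l) N"
      unfolding sigma_gKR_def has_GKRD_def by blast
    have MNz: "reducing_pair (opshift T z) M N" for z
      using reducing_pair_opshift[OF MN, of "z - l"] by (simp add: opshift_opshift)
    have lF: "l \<in> frontier (spectrum T)" using l ap_frontier by simp
    obtain c where c: "c > 0" "\<And>\<nu>. cmod \<nu> < c \<Longrightarrow> invertible_on (opshift T (l + \<nu>)) M"
      using kato_part_invertible_near_zero[OF bounded_clinear_opshift[OF T] MN K
          frontier_spectrum_resolvent_near[OF lF]]
      by (auto simp: opshift_opshift)
    obtain \<nu> where "cmod \<nu> < c" "invertible_on (opshift T (l + \<nu>)) UNIV"
      using frontier_spectrum_resolvent_near[OF lF c(1)] by (auto simp: opshift_opshift)
    then have "l + \<nu> \<in> ball l c" "l + \<nu> \<notin> spectrum T" by (simp_all add: spectrum_opshift_iff dist_norm)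
    then obtain w' where w': "w' \<in> ball l c - {l}" "w' \<in> frontier (spectrum T)"
      using frontier_in_punctured_ball sigma_ap_subset_spectrum[OF T] l no_isolated lF by blast
    define \<mu> where "\<mu> = w' - l"
    have TS: "opshift T w' = opshift (opshift T l) \<mu>" by (simp add: \<mu>_def opshift_opshift)
    have "\<mu> \<noteq> 0" using w'(1) by (simp add: \<mu>_def)
    then have "fredholm_on (opshift T w') N" using R unfolding TS riesz_on_def by blast
    from riesz_part_invertible_punctured[OF bounded_clinear_opshift[OF T] MNz this
        frontier_spectrum_resolvent_near[OF w'(2)]]
    obtain \<rho> where \<rho>: "\<rho> > 0" "\<And>\<nu>. \<nu> \<noteq> 0 \<Longrightarrow> cmod \<nu> < \<rho> \<Longrightarrow> invertible_on (opshift T (w' + \<nu>)) N"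
      by (auto simp: opshift_opshift)
    have "min \<rho> (c - cmod \<mu>) > 0" using \<rho>(1) w'(1) by (simp add: \<mu>_def dist_norm norm_minus_commute)
    then obtain x' where x': "x' \<in> spectrum T" "x' \<noteq> w'" "dist x' w' < min \<rho> (c - cmod \<mu>)"
      using no_isolated w'(2) unfolding islimpt_approachable by blast
    have "invertible_on (opshift T x') M"
      using c(2)[of "x' - l"] x'(3) norm_triangle_ineq[of "x' - w'" \<mu>] by (simp add: \<mu>_def dist_norm)
    moreover have "invertible_on (opshift T x') N"
      using \<rho>(2)[of "x' - w'"] x'(2,3) by (simp add: dist_norm)
    ultimately show False
      using x'(1) reducing_pair_invertible_iff[OF bounded_clinear_opshift[OF T] MNz]
      by (simp add: spectrum_opshift_iff)
  qed
qed

theorem theorem3p22: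
  fixes T :: "'a::cbanach \<Rightarrow> 'a"
  assumes inf_dim: "\<not> fin_dim (UNIV :: 'a set)"
    and T_bounded: "bounded_clinear T"
    and ap_frontier: "sigma_ap T = frontier (spectrum T)"
    and no_isolated: "\<forall>z\<in>frontier (spectrum T). z islimpt spectrum T"
  shows "sigma_ec T \<subseteq> sigma_ap T
    \<and> sigma_ap T = sigma_gKR T
    \<and> sigma_gKR T = sigma_gK T
    \<and> sigma_gK T = sigma_Kt T
    \<and> sigma_Kt T = sigma_eK T
    \<and> sigma_eK T = sigma_K T
    \<and> sigma_K T = sigma_gDRM T"
  using spectra_inclusions[OF T_bounded] sigma_ap_subset_sigma_gKR[OF T_bounded ap_frontier no_isolated]
  by blast

end
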